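(* For every $m\ge0$, the algebra of $\mathfrak{gl}^M$-module endomorphisms of $(V^*/V_* )^{\otimes m}$ is isomorphic to the group algebra $\mathbb{K}[S_m]$ of the symmetric group $S_m$ (acting by permuting tensorands).
   Context: $\mathbb{K}$ is a field of characteristic $0$; $V,V_*$ countably infinite-dimensional with a nondegenerate pairing $\mathrm{p}:V\otimes V_*\to\mathbb{K}$, $V_*\subseteq V^*=\mathrm{Hom}_{\mathbb{K}}(V,\mathbb{K})$ via $\mathrm{p}$; $\mathfrak{gl}^M=\{\varphi\in\mathrm{End}_{\mathbb{K}}(V)\mid\varphi^*(V_* )\subseteq V_*\}$, acting on $V^*/V_*$ via the dual action. *)

theory Defs
  imports Main "HOL.Vector_Spaces" "HOL-Library.Function_Algebras" "HOL-Library.Countable_Set" "HOL-Combinatorics.Permutations"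
begin

definition fscale :: "'k::field \<Rightarrow> ('v \<Rightarrow> 'k) \<Rightarrow> ('v \<Rightarrow> 'k)" where
  "fscale c f = (\<lambda>x. c * f x)"

definition alg_dual :: "('k::field \<Rightarrow> 'v::ab_group_add \<Rightarrow> 'v) \<Rightarrow> ('v \<Rightarrow> 'k) set" where
  "alg_dual sV = {f. Vector_Spaces.linear sV (*) f}"

text \<open>Standing assumptions: V is a countably infinite-dimensional K-vector space, and
  V_* (given as a subspace W of V^*) is countably infinite-dimensional and the pairing
  V x V_* -> K, (v,f) |-> f v, is nondegenerate.\<close>
definition mackey_pair :: "('k::field \<Rightarrow> 'v::ab_group_add \<Rightarrow> 'v) \<Rightarrow> ('v \<Rightarrow> 'k) set \<Rightarrow> bool" where
  "mackey_pair sV W \<longleftrightarrow>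
     vector_space sV \<and>
     (\<exists>B. \<not> module.dependent sV B \<and> module.span sV B = UNIV \<and> countable B \<and> infinite B) \<and>
     W \<subseteq> alg_dual sV \<and> module.subspace fscale W \<and>
     (\<exists>C. C \<subseteq> W \<and> \<not> module.dependent fscale C \<and> module.span fscale C = W \<and> countable C \<and> infinite C) \<and>
     (\<forall>v. v \<noteq> 0 \<longrightarrow> (\<exists>f\<in>W. f v \<noteq> 0)) \<and>
     (\<forall>f\<in>W. f \<noteq> 0 \<longrightarrow> (\<exists>v. f v \<noteq> 0))"

definition glM :: "('k::field \<Rightarrow> 'v::ab_group_add \<Rightarrow> 'v) \<Rightarrow> ('v \<Rightarrow> 'k) set \<Rightarrow> ('v \<Rightarrow> 'v) set" where
  "glM sV W = {\<phi>. Vector_Spaces.linear sV sV \<phi> \<and> (\<forall>f\<in>W. f \<circ> \<phi> \<in> W)}"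

definition dact :: "('v \<Rightarrow> 'v) \<Rightarrow> ('v \<Rightarrow> 'k::field) \<Rightarrow> ('v \<Rightarrow> 'k)" where
  "dact \<phi> f = (\<lambda>v. - f (\<phi> v))"

definition args :: "('k::field \<Rightarrow> 'v::ab_group_add \<Rightarrow> 'v) \<Rightarrow> nat \<Rightarrow> ('v \<Rightarrow> 'k) list set" where
  "args sV m = {fs. length fs = m \<and> set fs \<subseteq> alg_dual sV}"

text \<open>F is a multilinear map on (V^*)^m (with values in a module with scaling sX) which
  vanishes as soon as one argument lies in V_* = W; i.e. F is a multilinear map on
  (V^*/V_*)^m.\<close>
definition quot_multilinear ::
  "('k::field \<Rightarrow> 'v::ab_group_add \<Rightarrow> 'v) \<Rightarrow> ('v \<Rightarrow> 'k) set \<Rightarrow> ('k \<Rightarrow> 'x::ab_group_add \<Rightarrow> 'x)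
     \<Rightarrow> nat \<Rightarrow> (('v \<Rightarrow> 'k) list \<Rightarrow> 'x) \<Rightarrow> bool" where
  "quot_multilinear sV W sX m F \<longleftrightarrow>
     (\<forall>fs\<in>args sV m. \<forall>i<m. \<forall>g\<in>alg_dual sV. \<forall>h\<in>alg_dual sV. \<forall>c.
        F (fs[i := g + h]) = F (fs[i := g]) + F (fs[i := h]) \<and>
        F (fs[i := fscale c g]) = sX c (F (fs[i := g]))) \<and>
     (\<forall>fs\<in>args sV m. (\<exists>i<m. fs ! i \<in> W) \<longrightarrow> F fs = 0)"

text \<open>(T, iota) is the m-th tensor power of V^*/V_*, with iota (f_1,...,f_m) the tensor
  [f_1] (x) ... (x) [f_m]: T is a K-vector space, iota is multilinear on (V^*/V_*)^m, its
  image spans T, and every K-valued multilinear form on (V^*/V_*)^m factors uniquely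
  through a linear functional on T (universal property; together with spanning this
  characterises the tensor power up to unique isomorphism).\<close>
definition is_quot_tensor_power ::
  "('k::field \<Rightarrow> 'v::ab_group_add \<Rightarrow> 'v) \<Rightarrow> ('v \<Rightarrow> 'k) set \<Rightarrow> ('k \<Rightarrow> 't::ab_group_add \<Rightarrow> 't)
     \<Rightarrow> nat \<Rightarrow> (('v \<Rightarrow> 'k) list \<Rightarrow> 't) \<Rightarrow> bool" where
  "is_quot_tensor_power sV W sT m \<iota> \<longleftrightarrow>
     vector_space sT \<and>
     quot_multilinear sV W sT m \<iota> \<and>
     module.span sT (\<iota> ` args sV m) = UNIV \<and>
     (\<forall>g. quot_multilinear sV W (*) m g \<longrightarrow>
        (\<exists>l. Vector_Spaces.linear sT (*) l \<and> (\<forall>fs\<in>args sV m. g fs = l (\<iota> fs))))"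

definition tens_act ::
  "('k::field \<Rightarrow> 'v::ab_group_add \<Rightarrow> 'v) \<Rightarrow> ('k \<Rightarrow> 't::ab_group_add \<Rightarrow> 't)
     \<Rightarrow> nat \<Rightarrow> (('v \<Rightarrow> 'k) list \<Rightarrow> 't) \<Rightarrow> ('v \<Rightarrow> 'v) \<Rightarrow> ('t \<Rightarrow> 't) \<Rightarrow> bool" where
  "tens_act sV sT m \<iota> \<phi> A \<longleftrightarrow>
     Vector_Spaces.linear sT sT A \<and>
     (\<forall>fs\<in>args sV m. A (\<iota> fs) = (\<Sum>i<m. \<iota> (fs[i := dact \<phi> (fs ! i)])))"

definition gl_end ::
  "('k::field \<Rightarrow> 'v::ab_group_add \<Rightarrow> 'v) \<Rightarrow> ('v \<Rightarrow> 'k) set \<Rightarrow> ('k \<Rightarrow> 't::ab_group_add \<Rightarrow> 't)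
     \<Rightarrow> nat \<Rightarrow> (('v \<Rightarrow> 'k) list \<Rightarrow> 't) \<Rightarrow> ('t \<Rightarrow> 't) set" where
  "gl_end sV W sT m \<iota> =
     {E. Vector_Spaces.linear sT sT E \<and>
         (\<forall>\<phi>\<in>glM sV W. \<forall>A. tens_act sV sT m \<iota> \<phi> A \<longrightarrow> E \<circ> A = A \<circ> E)}"

definition Sym :: "nat \<Rightarrow> (nat \<Rightarrow> nat) set" where
  "Sym m = {\<sigma>. \<sigma> permutes {..<m}}"

text \<open>The operator by which sigma permutes the tensorands: the factor in position i is
  moved to position sigma i.\<close>
definition perm_op ::
  "('k::field \<Rightarrow> 'v::ab_group_add \<Rightarrow> 'v) \<Rightarrow> ('k \<Rightarrow> 't::ab_group_add \<Rightarrow> 't)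
     \<Rightarrow> nat \<Rightarrow> (('v \<Rightarrow> 'k) list \<Rightarrow> 't) \<Rightarrow> (nat \<Rightarrow> nat) \<Rightarrow> ('t \<Rightarrow> 't)" where
  "perm_op sV sT m \<iota> \<sigma> =
     (THE A. Vector_Spaces.linear sT sT A \<and>
        (\<forall>fs\<in>args sV m. A (\<iota> fs) = \<iota> (permute_list (inv \<sigma>) fs)))"

text \<open>The group algebra K[S_m]: functions S_m -> K (extended by 0), with convolution.\<close>
definition grp_alg :: "nat \<Rightarrow> ((nat \<Rightarrow> nat) \<Rightarrow> 'k::field) set" where
  "grp_alg m = {a. \<forall>\<sigma>. \<sigma> \<notin> Sym m \<longrightarrow> a \<sigma> = 0}"

definition ga_mult :: "nat \<Rightarrow> ((nat \<Rightarrow> nat) \<Rightarrow> 'k::field) \<Rightarrow> ((nat \<Rightarrow> nat) \<Rightarrow> 'k) \<Rightarrow> ((nat \<Rightarrow> nat) \<Rightarrow> 'k)" where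
  "ga_mult m a b = (\<lambda>\<rho>. if \<rho> \<in> Sym m then (\<Sum>\<sigma>\<in>Sym m. a \<sigma> * b (inv \<sigma> \<circ> \<rho>)) else 0)"

definition ga_one :: "(nat \<Rightarrow> nat) \<Rightarrow> 'k::field" where
  "ga_one = (\<lambda>\<sigma>. if \<sigma> = id then 1 else 0)"

definition perm_rep ::
  "('k::field \<Rightarrow> 'v::ab_group_add \<Rightarrow> 'v) \<Rightarrow> ('k \<Rightarrow> 't::ab_group_add \<Rightarrow> 't)
     \<Rightarrow> nat \<Rightarrow> (('v \<Rightarrow> 'k) list \<Rightarrow> 't) \<Rightarrow> ((nat \<Rightarrow> nat) \<Rightarrow> 'k) \<Rightarrow> ('t \<Rightarrow> 't)" where
  "perm_rep sV sT m \<iota> a = (\<lambda>t. \<Sum>\<sigma>\<in>Sym m. sT (a \<sigma>) (perm_op sV sT m \<iota> \<sigma> t))"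

end

theory Submission
  imports Defs "HOL-Library.Sublist"
begin

text \<open>
  Choose dual bases (v_n) of V and (w_n) of V_*, by Mackey's back-and-forth argument; then V_*
  consists exactly of the functionals with finitely many nonzero coordinates. Split the indices
  into residue classes mod m, let e_k be the functional that is 1 on the v_n with n = k mod m and 0
  on the others (so e_k is not in V_*), and put x = [e_0] \<otimes> ... \<otimes> [e_(m-1)].

  The tensor x is cyclic: an operator commuting with gl^M and vanishing at x vanishes, because an
  element of gl^M sending v_j to a multiple of v_(r + m j) turns e_r into any prescribed
  functional while killing every other e_i.

  If E commutes with gl^M, then y = E x is an eigenvector, with eigenvalue -1, of every class
  projection, and it is killed by every shift v_j \<mapsto> v_(j+m) - v_j within a class. Decompose y by
  applying class projections in all slots. The first property kills the components whose class
  assignment is not a permutation. The dual action of a shift can be inverted modulo V_* up to the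
  e_k-coefficient, so the second property forces the component of a permutation into the line
  spanned by the corresponding permuted copy of x. Hence E x = \<Sum> a_\<sigma> \<sigma> x, and E = \<Sum> a_\<sigma> \<sigma> by
  cyclicity. The coefficients a_\<sigma> are read off by the multilinear forms multiplying the
  e_k-coefficients of the slots, which gives injectivity.
\<close>

lemma vector_space_fscale: "vector_space (fscale :: 'k::field \<Rightarrow> ('v \<Rightarrow> 'k) \<Rightarrow> _)"
  by unfold_locales (auto simp: fscale_def algebra_simps fun_eq_iff)

lemma vector_space_mult: "vector_space ((*) :: 'k::field \<Rightarrow> 'k \<Rightarrow> 'k)"
  by unfold_locales (auto simp: algebra_simps)

lemma fscale_apply [simp]: "fscale c f x = c * f x"
  by (simp add: fscale_def)

lemma sum_fun_apply: "(\<Sum>i\<in>I. g i) x = (\<Sum>i\<in>I. g i x)"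
  by (induct I rule: infinite_finite_induct) auto

lemma prefix_nth: "prefix xs ys \<Longrightarrow> i < length xs \<Longrightarrow> ys ! i = xs ! i"
  by (auto elim!: prefixE simp: nth_append)

lemma finite_Sym: "finite (Sym m)"
  unfolding Sym_def by (rule finite_permutations) simp

lemma id_in_Sym: "id \<in> Sym m"
  by (simp add: Sym_def permutes_id)

lemma Sym_comp: "\<sigma> \<in> Sym m \<Longrightarrow> \<tau> \<in> Sym m \<Longrightarrow> \<sigma> \<circ> \<tau> \<in> Sym m"
  unfolding Sym_def by (simp add: permutes_compose)

lemma Sym_inv: "\<sigma> \<in> Sym m \<Longrightarrow> inv \<sigma> \<in> Sym m"
  unfolding Sym_def by (simp add: permutes_inv)

lemma bij_betw_Sym_comp_left:
  assumes "\<sigma> \<in> Sym m"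
  shows "bij_betw ((\<circ>) \<sigma>) (Sym m) (Sym m)"
proof (rule bij_betwI[where g = "(\<circ>) (inv \<sigma>)"])
  have p: "\<sigma> permutes {..<m}" using assms by (simp add: Sym_def)
  show "(\<circ>) \<sigma> \<in> Sym m \<rightarrow> Sym m" "(\<circ>) (inv \<sigma>) \<in> Sym m \<rightarrow> Sym m"
    using Sym_comp Sym_inv assms by blast+
  show "inv \<sigma> \<circ> (\<sigma> \<circ> \<tau>) = \<tau>" "\<sigma> \<circ> (inv \<sigma> \<circ> \<tau>) = \<tau>" for \<tau>
    by (simp_all add: comp_assoc[symmetric] permutes_inv_o[OF p])
qed

lemma permute_list_inv_nth:
  assumes "\<sigma> permutes {..<length xs}" "i < length xs"
  shows "permute_list (inv \<sigma>) xs ! i = xs ! inv \<sigma> i"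
  using assms by (intro permute_list_nth) (auto simp: permutes_inv)

lemma permute_list_inv_nth_image:
  assumes "\<sigma> permutes {..<length xs}" "i < length xs"
  shows "permute_list (inv \<sigma>) xs ! \<sigma> i = xs ! i"
  using assms permutes_in_image[OF assms(1)]
  by (simp add: permute_list_inv_nth permutes_inverses(2))

lemma permute_list_inv_update:
  assumes p: "\<sigma> permutes {..<length xs}" and i: "i < length xs"
  shows "permute_list (inv \<sigma>) (xs[i := x]) = (permute_list (inv \<sigma>) xs)[\<sigma> i := x]"
proof (rule nth_equalityI)
  fix j assume "j < length (permute_list (inv \<sigma>) (xs[i := x]))"
  then have j: "j < length xs" by simp
  have "inv \<sigma> j < length xs"
    using permutes_in_image[OF permutes_inv[OF p]] j by auto
  moreover have "inv \<sigma> j = i \<longleftrightarrow> j = \<sigma> i"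
    using permutes_inv_eq[OF p] by auto
  ultimately show "permute_list (inv \<sigma>) (xs[i := x]) ! j = (permute_list (inv \<sigma>) xs)[\<sigma> i := x] ! j"
    using p j by (auto simp: permute_list_inv_nth nth_list_update)
qed simp

lemma sum_PiE_insert:
  assumes "x \<notin> S"
  shows "(\<Sum>g\<in>PiE (insert x S) T. h g) = (\<Sum>y\<in>T x. \<Sum>g\<in>PiE S T. h (g(x := y)))"
proof -
  have "(\<Sum>g\<in>PiE (insert x S) T. h g) = (\<Sum>(y, g)\<in>T x \<times> PiE S T. h (g(x := y)))"
    unfolding PiE_insert_eq by (subst sum.reindex[OF inj_combinator[OF assms]]) (simp add: case_prod_beta')
  then show ?thesis
    by (simp add: sum.cartesian_product)
qed

lemma sum_residue_class_telescope:
  fixes g :: "nat \<Rightarrow> 'a::ab_group_add"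
  assumes k: "k < m" and j: "j mod m = k"
  shows "(\<Sum>l\<in>{l. l < j \<and> l mod m = k}. g l - g (l + m)) = g k - g j"
proof -
  define t where "t = j div m"
  have j_eq: "j = k + m * t"
    using mod_mult_div_eq[of j m] j unfolding t_def by simp
  have "{l. l < j \<and> l mod m = k} = (\<lambda>r. k + m * r) ` {..<t}"
  proof (intro set_eqI iffI)
    fix l assume l: "l \<in> {l. l < j \<and> l mod m = k}"
    then have l_eq: "l = k + m * (l div m)"
      using mod_mult_div_eq[of l m] by simp
    moreover have "l div m < t"
    proof (rule ccontr)
      assume "\<not> l div m < t"
      then have "m * t \<le> m * (l div m)" by simp
      then have "j \<le> l" using j_eq l_eq by linarith
      with l show False by simp
    qed
    ultimately show "l \<in> (\<lambda>r. k + m * r) ` {..<t}" by blast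
  next
    fix l assume "l \<in> (\<lambda>r. k + m * r) ` {..<t}"
    then obtain r where r: "r < t" "l = k + m * r" by blast
    then have "m * r < m * t" using k by simp
    then show "l \<in> {l. l < j \<and> l mod m = k}" using r k j_eq by simp
  qed
  moreover have "inj_on (\<lambda>r. k + m * r) {..<t}"
    using k by (auto simp: inj_on_def)
  ultimately have "(\<Sum>l\<in>{l. l < j \<and> l mod m = k}. g l - g (l + m))
      = (\<Sum>r<t. g (k + m * r) - g (k + m * Suc r))"
    by (simp add: sum.reindex algebra_simps)
  also have "\<dots> = g k - g j"
    using sum_lessThan_telescope'[of "\<lambda>r. g (k + m * r)" t] j_eq by simp
  finally show ?thesis .
qed

lemma PiE_not_inj_on_misses:
  fixes \<beta> :: "nat \<Rightarrow> nat"
  assumes "\<beta> \<in> PiE {..<m} (\<lambda>_. {..<m})" "\<not> inj_on \<beta> {..<m}"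
  shows "\<exists>k<m. \<forall>i<m. \<beta> i \<noteq> k"
proof (rule ccontr)
  assume "\<not> (\<exists>k<m. \<forall>i<m. \<beta> i \<noteq> k)"
  then have "\<beta> ` {..<m} = {..<m}"
    using assms(1) by (auto simp: PiE_def)
  then have "card (\<beta> ` {..<m}) = card {..<m}"
    by simp
  then show False
    using assms(2) inj_on_iff_eq_card[OF finite_lessThan, of \<beta>] by simp
qed

lemma inv_Sym_lessThan: "\<sigma> \<in> Sym m \<Longrightarrow> i < m \<Longrightarrow> inv \<sigma> i < m"
  using permutes_in_image[OF permutes_inv] by (fastforce simp: Sym_def)

lemma restrict_inv_Sym_PiE: "\<sigma> \<in> Sym m \<Longrightarrow> restrict (inv \<sigma>) {..<m} \<in> PiE {..<m} (\<lambda>_. {..<m})"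
  by (auto simp: inv_Sym_lessThan)

lemma inj_on_restrict_inv_Sym: "\<sigma> \<in> Sym m \<Longrightarrow> inj_on (restrict (inv \<sigma>) {..<m}) {..<m}"
  using permutes_inj[OF permutes_inv] by (auto simp: Sym_def inj_on_def inj_def)

lemma permutes_extend_inj_PiE:
  fixes \<beta> :: "nat \<Rightarrow> nat"
  assumes "\<beta> \<in> PiE {..<m} (\<lambda>_. {..<m})" "inj_on \<beta> {..<m}"
  shows "(\<lambda>i. if i < m then \<beta> i else i) permutes {..<m}" (is "?e permutes _")
proof (rule bij_imp_permutes)
  have inj: "inj_on ?e {..<m}" using assms(2) by (auto simp: inj_on_def)
  moreover have "?e ` {..<m} \<subseteq> {..<m}" using assms(1) by auto
  ultimately have "?e ` {..<m} = {..<m}" by (intro endo_inj_surj) simp_all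
  with inj show "bij_betw ?e {..<m} {..<m}" by (simp add: bij_betw_def)
qed simp

lemma sum_inj_PiE_eq_sum_Sym:
  "(\<Sum>\<beta>\<in>{\<beta> \<in> PiE {..<m} (\<lambda>_. {..<m}). inj_on \<beta> {..<m}}. G \<beta>) = (\<Sum>\<sigma>\<in>Sym m. G (restrict (inv \<sigma>) {..<m}))"
proof (rule sum.reindex_bij_witness[where j = "\<lambda>\<beta>. inv (\<lambda>i. if i < m then \<beta> i else i)"
      and i = "\<lambda>\<sigma>. restrict (inv \<sigma>) {..<m}"])
  fix \<beta> assume "\<beta> \<in> {\<beta> \<in> PiE {..<m} (\<lambda>_. {..<m}). inj_on \<beta> {..<m}}"
  then have \<beta>: "\<beta> \<in> PiE {..<m} (\<lambda>_. {..<m})" "inj_on \<beta> {..<m}" by auto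
  note p = permutes_extend_inj_PiE[OF \<beta>]
  show "inv (\<lambda>i. if i < m then \<beta> i else i) \<in> Sym m"
    using permutes_inv[OF p] by (simp add: Sym_def)
  show "restrict (inv (inv (\<lambda>i. if i < m then \<beta> i else i))) {..<m} = \<beta>"
    using \<beta>(1) by (auto simp: permutes_inv_inv[OF p] PiE_def extensional_def)
  then show "G (restrict (inv (inv (\<lambda>i. if i < m then \<beta> i else i))) {..<m}) = G \<beta>"
    by simp
next
  fix \<sigma> assume \<sigma>: "\<sigma> \<in> Sym m"
  then have p: "inv \<sigma> permutes {..<m}" by (simp add: Sym_def permutes_inv)
  have "(\<lambda>i. if i < m then restrict (inv \<sigma>) {..<m} i else i) = inv \<sigma>"
    using permutes_not_in[OF p] by (auto simp: fun_eq_iff)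
  then show "inv (\<lambda>i. if i < m then restrict (inv \<sigma>) {..<m} i else i) = \<sigma>"
    using \<sigma> permutes_inv_inv by (auto simp: Sym_def)
  show "restrict (inv \<sigma>) {..<m} \<in> {\<beta> \<in> PiE {..<m} (\<lambda>_. {..<m}). inj_on \<beta> {..<m}}"
    using restrict_inv_Sym_PiE[OF \<sigma>] inj_on_restrict_inv_Sym[OF \<sigma>] by blast
qed

lemma (in vector_space) exists_functional_vanishing_on_subspace:
  assumes S: "subspace S" and x: "x \<notin> S"
  shows "\<exists>l. Vector_Spaces.linear scale (*) l \<and> l x = 1 \<and> (\<forall>y\<in>S. l y = 0)"
proof -
  interpret P: vector_space_pair scale "(*) :: 'a \<Rightarrow> 'a \<Rightarrow> 'a"
    by unfold_locales (auto simp: algebra_simps)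
  obtain B where B: "B \<subseteq> S" "independent B" "S \<subseteq> span B"
    using maximal_independent_subset by blast
  have "span B = S"
    using B S span_minimal[OF B(1) S] by blast
  then have indep: "independent (insert x B)"
    using B(2) x by (intro independent_insertI) auto
  define l where "l = P.construct (insert x B) (\<lambda>y. if y = x then 1 else 0)"
  have lin: "Vector_Spaces.linear scale (*) l"
    unfolding l_def by (rule P.linear_construct[OF indep])
  have "l y = 0" if "y \<in> S" for y
  proof (rule P.linear_eq_0_on_span[OF lin])
    fix b assume "b \<in> B"
    with x B(1) show "l b = 0"
      by (auto simp: l_def P.construct_basis[OF indep])
  qed (use that B(3) in blast)
  with lin show ?thesis
    by (intro exI[of _ l]) (simp add: l_def P.construct_basis[OF indep])
qed

section \<open>Mackey pairs and dual bases\<close>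

locale mackey_pairing =
  fixes sV :: "'k::field \<Rightarrow> 'v::ab_group_add \<Rightarrow> 'v" and W :: "('v \<Rightarrow> 'k) set"
  assumes mackey: "mackey_pair sV W"
begin

sublocale V: vector_space sV
  using mackey by (simp add: mackey_pair_def)
sublocale F: vector_space "fscale :: 'k \<Rightarrow> ('v \<Rightarrow> 'k) \<Rightarrow> _"
  by (rule vector_space_fscale)
sublocale K: vector_space "(*) :: 'k \<Rightarrow> 'k \<Rightarrow> 'k"
  by (rule vector_space_mult)

abbreviation "Vdual \<equiv> alg_dual sV"

lemma alg_dual_iff:
  "f \<in> Vdual \<longleftrightarrow> (\<forall>x y. f (x + y) = f x + f y) \<and> (\<forall>c x. f (sV c x) = c * f x)"
  unfolding alg_dual_def linear_iff using V.vector_space_axioms vector_space_mult by auto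

lemma dual_add_apply: "f \<in> Vdual \<Longrightarrow> f (x + y) = f x + f y"
  by (simp add: alg_dual_iff)

lemma dual_scale_apply: "f \<in> Vdual \<Longrightarrow> f (sV c x) = c * f x"
  by (simp add: alg_dual_iff)

lemma dual_zero_apply: "f \<in> Vdual \<Longrightarrow> f 0 = 0"
  using dual_scale_apply[of f 0 0] by simp

lemma dual_diff_apply: "f \<in> Vdual \<Longrightarrow> f (x - y) = f x - f y"
  by (metis dual_add_apply eq_diff_eq)

lemma dual_sum_apply: "f \<in> Vdual \<Longrightarrow> f (\<Sum>i\<in>I. x i) = (\<Sum>i\<in>I. f (x i))"
  by (induct I rule: infinite_finite_induct) (simp_all add: dual_zero_apply dual_add_apply)

lemma alg_dual_subspace: "F.subspace Vdual"
proof -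
  have "f + g \<in> Vdual" if "f \<in> Vdual" "g \<in> Vdual" for f g
    using that unfolding alg_dual_iff by (simp add: add_ac distrib_left)
  moreover have "fscale c f \<in> Vdual" if "f \<in> Vdual" for c f
    using that unfolding alg_dual_iff by (simp add: distrib_left mult.left_commute)
  ultimately show ?thesis
    unfolding F.subspace_def by (simp add: alg_dual_iff)
qed

lemmas dual_zero = F.subspace_0[OF alg_dual_subspace]
  and dual_add = F.subspace_add[OF alg_dual_subspace]
  and dual_scale = F.subspace_scale[OF alg_dual_subspace]
  and dual_neg = F.subspace_neg[OF alg_dual_subspace]
  and dual_diff = F.subspace_diff[OF alg_dual_subspace]
  and dual_sum = F.subspace_sum[OF alg_dual_subspace]

lemma W_subset_dual: "W \<subseteq> Vdual"
  using mackey by (simp add: mackey_pair_def)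

lemma W_subspace: "F.subspace W"
  using mackey by (simp add: mackey_pair_def)

lemmas W_zero = F.subspace_0[OF W_subspace]
  and W_scale = F.subspace_scale[OF W_subspace]
  and W_neg = F.subspace_neg[OF W_subspace]
  and W_diff = F.subspace_diff[OF W_subspace]
  and W_sum = F.subspace_sum[OF W_subspace]

lemma nondegenerate: "v \<noteq> 0 \<Longrightarrow> \<exists>f\<in>W. f v \<noteq> 0"
  using mackey unfolding mackey_pair_def by blast

lemma glM_linear: "\<phi> \<in> glM sV W \<Longrightarrow> Vector_Spaces.linear sV sV \<phi>"
  by (simp add: glM_def)

lemma glM_W: "\<phi> \<in> glM sV W \<Longrightarrow> f \<in> W \<Longrightarrow> f \<circ> \<phi> \<in> W"
  by (simp add: glM_def)

lemma dual_comp_linear: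
  assumes "Vector_Spaces.linear sV sV \<phi>" "f \<in> Vdual"
  shows "f \<circ> \<phi> \<in> Vdual"
proof -
  interpret L: linear sV sV \<phi> by fact
  show ?thesis
    unfolding alg_dual_iff using assms(2) by (simp add: L.add L.scale dual_add_apply dual_scale_apply)
qed

lemma dact_eq_neg_comp: "dact \<phi> f = - (f \<circ> \<phi>)"
  by (simp add: dact_def fun_eq_iff)

definition dual_endo :: "(('v \<Rightarrow> 'k) \<Rightarrow> ('v \<Rightarrow> 'k)) \<Rightarrow> bool" where
  "dual_endo l \<longleftrightarrow> (\<forall>f\<in>Vdual. l f \<in> Vdual) \<and> (\<forall>f\<in>Vdual. \<forall>g\<in>Vdual. l (f + g) = l f + l g)
     \<and> (\<forall>c. \<forall>f\<in>Vdual. l (fscale c f) = fscale c (l f)) \<and> (\<forall>w\<in>W. l w \<in> W)"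

lemma dual_endoI:
  assumes "\<And>f. f \<in> Vdual \<Longrightarrow> l f \<in> Vdual"
    and "\<And>f g. f \<in> Vdual \<Longrightarrow> g \<in> Vdual \<Longrightarrow> l (f + g) = l f + l g"
    and "\<And>c f. f \<in> Vdual \<Longrightarrow> l (fscale c f) = fscale c (l f)"
    and "\<And>w. w \<in> W \<Longrightarrow> l w \<in> W"
  shows "dual_endo l"
  using assms unfolding dual_endo_def by blast

lemma dual_endo_dual: "dual_endo l \<Longrightarrow> f \<in> Vdual \<Longrightarrow> l f \<in> Vdual"
  and dual_endo_add: "dual_endo l \<Longrightarrow> f \<in> Vdual \<Longrightarrow> g \<in> Vdual \<Longrightarrow> l (f + g) = l f + l g"
  and dual_endo_scale: "dual_endo l \<Longrightarrow> f \<in> Vdual \<Longrightarrow> l (fscale c f) = fscale c (l f)"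
  and dual_endo_W: "dual_endo l \<Longrightarrow> w \<in> W \<Longrightarrow> l w \<in> W"
  unfolding dual_endo_def by blast+

lemma dual_endo_id: "dual_endo id"
  by (rule dual_endoI) auto

lemma dual_endo_comp:
  assumes l: "dual_endo l" and l': "dual_endo l'"
  shows "dual_endo (l \<circ> l')"
proof (rule dual_endoI)
  fix f g assume fg: "f \<in> Vdual" "g \<in> Vdual"
  have "l (l' (f + g)) = l (l' f + l' g)"
    using l' fg by (simp only: dual_endo_add)
  also have "\<dots> = l (l' f) + l (l' g)"
    using dual_endo_add[OF l dual_endo_dual[OF l' fg(1)] dual_endo_dual[OF l' fg(2)]] .
  finally show "(l \<circ> l') (f + g) = (l \<circ> l') f + (l \<circ> l') g"
    by (simp only: comp_apply)
next
  fix c f assume f: "f \<in> Vdual"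
  have "l (l' (fscale c f)) = l (fscale c (l' f))"
    using l' f by (simp only: dual_endo_scale)
  also have "\<dots> = fscale c (l (l' f))"
    using dual_endo_scale[OF l dual_endo_dual[OF l' f]] .
  finally show "(l \<circ> l') (fscale c f) = fscale c ((l \<circ> l') f)"
    by (simp only: comp_apply)
qed (use l l' in \<open>simp_all add: dual_endo_dual dual_endo_W\<close>)

lemma dual_endo_diff: "dual_endo a \<Longrightarrow> dual_endo b \<Longrightarrow> dual_endo (\<lambda>f. a f - b f)"
  by (rule dual_endoI)
    (auto simp: dual_endo_dual dual_endo_add dual_endo_scale dual_endo_W dual_diff W_diff
      fun_eq_iff algebra_simps)

lemma dual_endo_sum:
  assumes "\<And>k. k \<in> K \<Longrightarrow> dual_endo (l k)"
  shows "dual_endo (\<lambda>f. \<Sum>k\<in>K. l k f)"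
proof (rule dual_endoI)
  fix f g assume "f \<in> Vdual" "g \<in> Vdual"
  then have "(\<Sum>k\<in>K. l k (f + g)) = (\<Sum>k\<in>K. l k f + l k g)"
    using assms by (intro sum.cong) (metis dual_endo_add)+
  then show "(\<Sum>k\<in>K. l k (f + g)) = (\<Sum>k\<in>K. l k f) + (\<Sum>k\<in>K. l k g)"
    by (simp only: sum.distrib)
qed (use assms in \<open>auto intro!: dual_sum W_sum simp: dual_endo_dual dual_endo_scale dual_endo_W
  fun_eq_iff sum_fun_apply sum_distrib_left\<close>)

lemma dual_endo_dact:
  assumes "\<phi> \<in> glM sV W"
  shows "dual_endo (dact \<phi>)"
proof (rule dual_endoI)
  fix f assume "f \<in> Vdual"
  then show "dact \<phi> f \<in> Vdual"
    unfolding dact_eq_neg_comp using dual_comp_linear[OF glM_linear[OF assms]] dual_neg by blast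
next
  fix w assume "w \<in> W"
  then show "dact \<phi> w \<in> W"
    unfolding dact_eq_neg_comp using glM_W[OF assms] W_neg by blast
qed (simp_all add: dact_def fun_eq_iff)

lemma dual_endo_comp_glM: "\<phi> \<in> glM sV W \<Longrightarrow> dual_endo (\<lambda>f. f \<circ> \<phi>)"
  by (rule dual_endoI) (auto simp: dual_comp_linear glM_linear glM_W)

text \<open>Mackey's construction: a finite biorthogonal system of vectors and functionals in V_* can
  always be enlarged so that it spans a given vector and, on the functional side, a given element
  of V_*; alternating over countable bases of V and V_* yields dual bases.\<close>

definition biorth :: "('v \<times> ('v \<Rightarrow> 'k)) list \<Rightarrow> bool" where
  "biorth ps \<longleftrightarrow> snd ` set ps \<subseteq> W \<and>
     (\<forall>i<length ps. \<forall>j<length ps. snd (ps ! i) (fst (ps ! j)) = (if i = j then 1 else 0))"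

lemma biorth_dual: "biorth ps \<Longrightarrow> i < length ps \<Longrightarrow> snd (ps ! i) \<in> Vdual"
  unfolding biorth_def using W_subset_dual nth_mem by fastforce

lemma biorth_coeff_vec:
  assumes "biorth ps" "j < length ps"
  shows "snd (ps ! j) (\<Sum>i<length ps. sV (a i) (fst (ps ! i))) = a j"
proof -
  have "snd (ps ! j) (\<Sum>i<length ps. sV (a i) (fst (ps ! i))) = (\<Sum>i<length ps. if i = j then a i else 0)"
    using assms by (intro trans[OF dual_sum_apply sum.cong])
      (auto simp: biorth_dual dual_scale_apply biorth_def)
  then show ?thesis using assms(2) by simp
qed

lemma biorth_coeff_fun:
  assumes "biorth ps" "j < length ps"
  shows "(\<Sum>i<length ps. fscale (a i) (snd (ps ! i))) (fst (ps ! j)) = a j"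
proof -
  have "(\<Sum>i<length ps. fscale (a i) (snd (ps ! i))) (fst (ps ! j)) = (\<Sum>i<length ps. if i = j then a i else 0)"
    using assms unfolding sum_fun_apply by (intro sum.cong) (auto simp: biorth_def)
  then show ?thesis using assms(2) by simp
qed

lemma biorth_snoc:
  assumes "biorth ps" "w \<in> W" "\<And>j. j < length ps \<Longrightarrow> w (fst (ps ! j)) = 0"
    "\<And>j. j < length ps \<Longrightarrow> snd (ps ! j) v = 0" "w v = 1"
  shows "biorth (ps @ [(v, w)])"
  using assms unfolding biorth_def by (auto simp: nth_append less_Suc_eq)

lemma biorth_extend_vec:
  assumes ps: "biorth ps"
  shows "\<exists>ps'. biorth ps' \<and> prefix ps ps' \<and> b \<in> V.span (fst ` set ps')"
proof (cases "b \<in> V.span (fst ` set ps)")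
  case False
  let ?n = "length ps"
  define b' where "b' = (\<Sum>i<?n. sV (snd (ps ! i) b) (fst (ps ! i)))"
  have b'_span: "b' \<in> V.span (fst ` set ps)"
    unfolding b'_def by (intro V.span_sum V.span_scale V.span_base) auto
  define v where "v = b - b'"
  have v_orth: "snd (ps ! j) v = 0" if "j < ?n" for j
    using that by (simp add: v_def b'_def dual_diff_apply biorth_dual[OF ps] biorth_coeff_vec[OF ps])
  have "v \<noteq> 0"
    using False b'_span by (auto simp: v_def)
  then obtain f where f: "f \<in> W" "f v \<noteq> 0"
    using nondegenerate by blast
  define w where "w = fscale (1 / f v) (f - (\<Sum>i<?n. fscale (f (fst (ps ! i))) (snd (ps ! i))))"
  have "w \<in> W"
    unfolding w_def using f(1) ps nth_mem by (fastforce simp: biorth_def intro!: W_scale W_diff W_sum)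
  moreover have "w (fst (ps ! j)) = 0" if "j < ?n" for j
    using biorth_coeff_fun[OF ps that] by (simp add: w_def)
  moreover have "w v = 1"
    using f(2) by (simp add: w_def sum_fun_apply v_orth)
  ultimately have "biorth (ps @ [(v, w)])"
    by (intro biorth_snoc[OF ps] v_orth)
  moreover have "b \<in> V.span (fst ` set (ps @ [(v, w)]))"
  proof -
    have "b = v + b'" by (simp add: v_def)
    also have "\<dots> \<in> V.span (fst ` set (ps @ [(v, w)]))"
      using V.span_mono[of "fst ` set ps" "fst ` set (ps @ [(v, w)])"] b'_span
      by (intro V.span_add) (auto intro: V.span_base)
    finally show ?thesis .
  qed
  ultimately show ?thesis
    by (intro exI[of _ "ps @ [(v, w)]"]) simp
qed (use ps in blast)

lemma biorth_extend_fun: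
  assumes ps: "biorth ps" and c: "c \<in> W"
  shows "\<exists>ps'. biorth ps' \<and> prefix ps ps' \<and> c \<in> F.span (snd ` set ps')"
proof (cases "c \<in> F.span (snd ` set ps)")
  case False
  let ?n = "length ps"
  define c' where "c' = (\<Sum>i<?n. fscale (c (fst (ps ! i))) (snd (ps ! i)))"
  have c'_span: "c' \<in> F.span (snd ` set ps)"
    unfolding c'_def by (intro F.span_sum F.span_scale F.span_base) auto
  define w where "w = c - c'"
  have w: "w \<in> W"
    unfolding w_def c'_def using c ps nth_mem by (fastforce simp: biorth_def intro!: W_diff W_sum W_scale)
  have w_orth: "w (fst (ps ! j)) = 0" if "j < ?n" for j
    using biorth_coeff_fun[OF ps that] by (simp add: w_def c'_def)
  have "w \<noteq> 0"
    using False c'_span by (auto simp: w_def)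
  then obtain x where x: "w x \<noteq> 0"
    by (auto simp: fun_eq_iff)
  define v where "v = sV (1 / w x) (x - (\<Sum>i<?n. sV (snd (ps ! i) x) (fst (ps ! i))))"
  have w_dual: "w \<in> Vdual"
    using w W_subset_dual by blast
  have "snd (ps ! j) v = 0" if "j < ?n" for j
    using that by (simp add: v_def dual_scale_apply dual_diff_apply biorth_dual[OF ps] biorth_coeff_vec[OF ps])
  moreover have "w v = 1"
    using x w_orth by (simp add: v_def dual_scale_apply[OF w_dual] dual_diff_apply[OF w_dual]
        dual_sum_apply[OF w_dual])
  ultimately have "biorth (ps @ [(v, w)])"
    by (intro biorth_snoc[OF ps w w_orth])
  moreover have "c \<in> F.span (snd ` set (ps @ [(v, w)]))"
  proof -
    have "c = w + c'" by (simp add: w_def)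
    also have "\<dots> \<in> F.span (snd ` set (ps @ [(v, w)]))"
      using F.span_mono[of "snd ` set ps" "snd ` set (ps @ [(v, w)])"] c'_span
      by (intro F.span_add) (auto intro: F.span_base)
    finally show ?thesis .
  qed
  ultimately show ?thesis
    by (intro exI[of _ "ps @ [(v, w)]"]) simp
qed (use ps in blast)

lemma biorth_extend:
  assumes ps: "biorth ps" and c: "c \<in> W"
  shows "\<exists>ps'. biorth ps' \<and> prefix ps ps' \<and> b \<in> V.span (fst ` set ps') \<and> c \<in> F.span (snd ` set ps')"
proof -
  obtain ps1 where ps1: "biorth ps1" "prefix ps ps1" "b \<in> V.span (fst ` set ps1)"
    using biorth_extend_vec[OF ps] by blast
  obtain ps2 where ps2: "biorth ps2" "prefix ps1 ps2" "c \<in> F.span (snd ` set ps2)"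
    using biorth_extend_fun[OF ps1(1) c] by blast
  have "b \<in> V.span (fst ` set ps2)"
    using ps1(3) V.span_mono[OF image_mono[OF set_mono_prefix[OF ps2(2)]]] by blast
  with ps1 ps2 show ?thesis
    using prefix_order.trans by blast
qed

end

locale biorth_chain = mackey_pairing sV W
  for sV :: "'k::field \<Rightarrow> 'v::ab_group_add \<Rightarrow> 'v" and W :: "('v \<Rightarrow> 'k) set" +
  fixes b :: "nat \<Rightarrow> 'v" and c :: "nat \<Rightarrow> 'v \<Rightarrow> 'k"
    and S :: "nat \<Rightarrow> ('v \<times> ('v \<Rightarrow> 'k)) list"
  assumes independent_b: "V.independent (range b)" and inj_b: "inj b"
    and span_b: "V.span (range b) = UNIV" and span_c: "W \<subseteq> F.span (range c)"
    and biorth_S: "biorth (S n)" and prefix_S: "prefix (S n) (S (Suc n))"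
    and b_in_S: "b n \<in> V.span (fst ` set (S (Suc n)))"
    and c_in_S: "c n \<in> F.span (snd ` set (S (Suc n)))"
begin

lemma prefix_S_mono: "n \<le> N \<Longrightarrow> prefix (S n) (S N)"
proof (induct N rule: dec_induct)
  case (step N)
  then show ?case
    using prefix_order.trans[OF _ prefix_S] by blast
qed simp

lemma length_S: "n \<le> length (S n)"
proof -
  have "b ` {..<n} \<subseteq> V.span (fst ` set (S n))"
  proof
    fix x assume "x \<in> b ` {..<n}"
    then obtain k where k: "k < n" "x = b k" by blast
    have "fst ` set (S (Suc k)) \<subseteq> fst ` set (S n)"
      using set_mono_prefix[OF prefix_S_mono[of "Suc k" n]] k by auto
    then show "x \<in> V.span (fst ` set (S n))"
      using b_in_S[of k] k V.span_mono by blast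
  qed
  moreover have "V.independent (b ` {..<n})"
    by (rule V.independent_mono[OF independent_b]) auto
  ultimately have "card (b ` {..<n}) \<le> card (fst ` set (S n))"
    using V.independent_span_bound by blast
  also have "\<dots> \<le> length (S n)"
    using card_image_le card_length le_trans by blast
  finally show ?thesis
    using card_image[OF inj_on_subset[OF inj_b]] by simp
qed

definition dvec :: "nat \<Rightarrow> 'v" where
  "dvec j = fst (S (Suc j) ! j)"

definition dfun :: "nat \<Rightarrow> 'v \<Rightarrow> 'k" where
  "dfun j = snd (S (Suc j) ! j)"

lemma S_nth: "i < length (S N) \<Longrightarrow> S N ! i = (dvec i, dfun i)"
proof (cases "N \<le> Suc i")
  case True
  assume "i < length (S N)"
  then show ?thesis
    using prefix_nth[OF prefix_S_mono[OF True]] by (simp add: dvec_def dfun_def)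
next
  case False
  have "i < length (S (Suc i))"
    using length_S[of "Suc i"] by simp
  then show ?thesis
    using prefix_nth[OF prefix_S_mono, of "Suc i" N] False by (simp add: dvec_def dfun_def)
qed

lemma dfun_dvec: "dfun n (dvec k) = (if n = k then 1 else 0)"
proof -
  define N where "N = Suc (max n k)"
  have "n < length (S N)" "k < length (S N)"
    using length_S[of N] unfolding N_def by auto
  then show ?thesis
    using biorth_S[of N] S_nth by (force simp: biorth_def)
qed

lemma dfun_W: "dfun n \<in> W"
proof -
  have "n < length (S (Suc n))"
    using length_S[of "Suc n"] by simp
  then show ?thesis
    using biorth_S[of "Suc n"] nth_mem by (fastforce simp: biorth_def dfun_def)
qed

lemma fst_set_S: "fst ` set (S N) \<subseteq> range dvec"
  and snd_set_S: "snd ` set (S N) \<subseteq> range dfun"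
  by (force simp: in_set_conv_nth S_nth)+

lemma inj_dvec: "inj dvec"
proof (rule injI)
  fix j k assume "dvec j = dvec k"
  then show "j = k"
    using dfun_dvec[of j j] dfun_dvec[of j k] by (simp split: if_splits)
qed

lemma independent_dvec: "V.independent (range dvec)"
  unfolding V.dependent_def
proof
  assume "\<exists>a\<in>range dvec. a \<in> V.span (range dvec - {a})"
  then obtain j where j: "dvec j \<in> V.span (range dvec - {dvec j})"
    by blast
  interpret VK: vector_space_pair sV "(*) :: 'k \<Rightarrow> 'k \<Rightarrow> 'k" ..
  have "Vector_Spaces.linear sV (*) (dfun j)"
    using dfun_W W_subset_dual by (auto simp: alg_dual_def)
  then have "dfun j (dvec j) = 0"
    by (rule VK.linear_eq_0_on_span[OF _ _ j]) (auto simp: dfun_dvec)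
  then show False
    by (simp add: dfun_dvec)
qed

lemma span_dvec: "V.span (range dvec) = UNIV"
proof -
  have "range b \<subseteq> V.span (range dvec)"
    using b_in_S V.span_mono[OF fst_set_S] by blast
  then have "V.span (range b) \<subseteq> V.span (range dvec)"
    by (rule V.span_minimal) simp
  then show ?thesis
    using span_b by blast
qed

lemma W_subset_span_dfun: "W \<subseteq> F.span (range dfun)"
proof -
  have "range c \<subseteq> F.span (range dfun)"
    using c_in_S F.span_mono[OF snd_set_S] by blast
  then have "F.span (range c) \<subseteq> F.span (range dfun)"
    by (rule F.span_minimal) simp
  then show ?thesis
    using span_c by blast
qed

end

locale mackey_dual_bases = mackey_pairing sV W
  for sV :: "'k::field \<Rightarrow> 'v::ab_group_add \<Rightarrow> 'v" and W :: "('v \<Rightarrow> 'k) set" +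
  fixes vb :: "nat \<Rightarrow> 'v" and ws :: "nat \<Rightarrow> 'v \<Rightarrow> 'k"
  assumes independent_vb: "V.independent (range vb)" and span_vb: "V.span (range vb) = UNIV"
    and inj_vb: "inj vb" and ws_W: "ws n \<in> W"
    and ws_vb: "ws n (vb k) = (if n = k then 1 else 0)"
    and W_subset_span_ws: "W \<subseteq> F.span (range ws)"
begin

interpretation VK: vector_space_pair sV "(*) :: 'k \<Rightarrow> 'k \<Rightarrow> 'k" ..
interpretation VV: vector_space_pair sV sV ..

definition coord_fun :: "(nat \<Rightarrow> 'k) \<Rightarrow> 'v \<Rightarrow> 'k" where
  "coord_fun g = VK.construct (range vb) (\<lambda>x. g (inv vb x))"

lemma coord_fun_dual: "coord_fun g \<in> Vdual"
  unfolding coord_fun_def alg_dual_def using VK.linear_construct[OF independent_vb] by blast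

lemma coord_fun_vb [simp]: "coord_fun g (vb n) = g n"
  unfolding coord_fun_def using VK.construct_basis[OF independent_vb, of "vb n"] inj_vb by simp

lemma dual_eqI:
  assumes "f \<in> Vdual" "g \<in> Vdual" "\<And>n. f (vb n) = g (vb n)"
  shows "f = g"
proof
  fix x
  show "f x = g x"
    by (rule VK.linear_eq_on[where B = "range vb"]) (use assms span_vb in \<open>auto simp: alg_dual_def\<close>)
qed

lemma coord_fun_coords: "f \<in> Vdual \<Longrightarrow> coord_fun (\<lambda>n. f (vb n)) = f"
  by (rule dual_eqI) (auto simp: coord_fun_dual)

definition basis_map :: "(nat \<Rightarrow> 'v) \<Rightarrow> 'v \<Rightarrow> 'v" where
  "basis_map h = VV.construct (range vb) (\<lambda>x. h (inv vb x))"

lemma linear_basis_map: "Vector_Spaces.linear sV sV (basis_map h)"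
  unfolding basis_map_def using VV.linear_construct[OF independent_vb] by blast

lemma basis_map_vb [simp]: "basis_map h (vb n) = h n"
  unfolding basis_map_def using VV.construct_basis[OF independent_vb, of "vb n"] inj_vb by simp

definition coord_supp :: "('v \<Rightarrow> 'k) \<Rightarrow> nat set" where
  "coord_supp f = {n. f (vb n) \<noteq> 0}"

lemma finite_coord_supp_W:
  assumes "f \<in> W"
  shows "finite (coord_supp f)"
proof -
  have "coord_supp (x + y) \<subseteq> coord_supp x \<union> coord_supp y" "coord_supp (fscale c x) \<subseteq> coord_supp x"
    for x y :: "'v \<Rightarrow> 'k" and c
    by (auto simp: coord_supp_def)
  then have subspace: "F.subspace {f. finite (coord_supp f)}"
    unfolding F.subspace_def by (auto intro: finite_subset simp: coord_supp_def)
  have "f \<in> F.span (range ws)"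
    using assms W_subset_span_ws by blast
  then show ?thesis
  proof (induct rule: F.span_induct)
    case (step x)
    then obtain n where "x = ws n" by blast
    then have "coord_supp x \<subseteq> {n}" by (auto simp: ws_vb coord_supp_def)
    then show ?case by (simp add: finite_subset)
  qed (use subspace in simp)
qed

lemma W_if_finite_coord_supp:
  assumes f: "f \<in> Vdual" and fin: "finite (coord_supp f)"
  shows "f \<in> W"
proof -
  let ?g = "\<Sum>n\<in>coord_supp f. fscale (f (vb n)) (ws n)"
  have g: "?g \<in> W" by (intro W_sum W_scale ws_W)
  have "?g = f"
  proof (rule dual_eqI)
    show "?g \<in> Vdual" using g W_subset_dual by blast
    fix k
    have "?g (vb k) = (\<Sum>n\<in>coord_supp f. if n = k then f (vb n) else 0)"
      unfolding sum_fun_apply by (intro sum.cong) (auto simp: ws_vb)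
    also have "\<dots> = f (vb k)" using fin by (simp add: coord_supp_def)
    finally show "?g (vb k) = f (vb k)" .
  qed (use f in simp)
  with g show ?thesis by simp
qed

lemma basis_map_glM:
  assumes "\<And>f. f \<in> W \<Longrightarrow> finite {j. f (h j) \<noteq> 0}"
  shows "basis_map h \<in> glM sV W"
  unfolding glM_def
proof (intro CollectI conjI ballI linear_basis_map)
  fix f assume f: "f \<in> W"
  show "f \<circ> basis_map h \<in> W"
    by (rule W_if_finite_coord_supp)
      (use dual_comp_linear[OF linear_basis_map] f W_subset_dual assms[OF f] in \<open>auto simp: coord_supp_def\<close>)
qed

end

lemma (in mackey_pairing) exists_dual_bases:
  "\<exists>vb ws. mackey_dual_bases sV W vb ws"
proof -
  obtain B where B: "V.independent B" "V.span B = UNIV" "countable B" "infinite B"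
    using mackey unfolding mackey_pair_def by blast
  obtain C where C: "C \<subseteq> W" "F.span C = W" "countable C" "infinite C"
    using mackey unfolding mackey_pair_def by blast
  define b where "b = from_nat_into B"
  define c where "c = from_nat_into C"
  have b: "bij_betw b UNIV B" and c: "bij_betw c UNIV C"
    unfolding b_def c_def using B C bij_betw_from_nat_into by blast+
  have "\<exists>S. \<forall>n. biorth (S n) \<and> prefix (S n) (S (Suc n)) \<and> b n \<in> V.span (fst ` set (S (Suc n)))
            \<and> c n \<in> F.span (snd ` set (S (Suc n)))"
  proof (rule dependent_nat_choice)
    show "\<exists>ps. biorth ps"
      by (rule exI[of _ "[]"]) (simp add: biorth_def)
    fix ps n assume "biorth ps"
    then show "\<exists>ps'. biorth ps' \<and> prefix ps ps' \<and> b n \<in> V.span (fst ` set ps')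
        \<and> c n \<in> F.span (snd ` set ps')"
      using biorth_extend[of ps "c n" "b n"] c C(1) by (auto simp: bij_betw_def)
  qed
  then obtain S where S: "\<And>n. biorth (S n)" "\<And>n. prefix (S n) (S (Suc n))"
    "\<And>n. b n \<in> V.span (fst ` set (S (Suc n)))" "\<And>n. c n \<in> F.span (snd ` set (S (Suc n)))"
    by blast
  interpret biorth_chain sV W b c S
    by unfold_locales (use S B C b c in \<open>auto simp: bij_betw_def\<close>)
  have "mackey_dual_bases sV W dvec dfun"
    by (intro mackey_dual_bases.intro mackey_pairing_axioms mackey_dual_bases_axioms.intro
        independent_dvec span_dvec inj_dvec dfun_W dfun_dvec W_subset_span_dfun)
  then show ?thesis by blast
qed


section \<open>The tensor power of V^*/V_* and the symmetric group\<close>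

locale quot_tensor_power = mackey_pairing sV W
  for sV :: "'k::field \<Rightarrow> 'v::ab_group_add \<Rightarrow> 'v" and W :: "('v \<Rightarrow> 'k) set" +
  fixes sT :: "'k \<Rightarrow> 't::ab_group_add \<Rightarrow> 't" and \<iota> :: "('v \<Rightarrow> 'k) list \<Rightarrow> 't" and m :: nat
  assumes tensor_power: "is_quot_tensor_power sV W sT m \<iota>"
begin

sublocale T: vector_space sT
  using tensor_power by (simp add: is_quot_tensor_power_def)
sublocale TT: vector_space_pair sT sT ..

abbreviation "Args \<equiv> args sV m"

lemma args_iff: "fs \<in> Args \<longleftrightarrow> length fs = m \<and> (\<forall>i<m. fs ! i \<in> Vdual)"
  by (auto simp: args_def in_set_conv_nth) (use nth_mem in blast)

lemma args_update:
  assumes "fs \<in> Args" "g \<in> Vdual"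
  shows "fs[i := g] \<in> Args"
  unfolding args_iff
proof (intro conjI allI impI)
  fix j assume "j < m"
  then show "fs[i := g] ! j \<in> Vdual"
    using assms by (cases "i = j") (auto simp: args_iff)
qed (use assms in \<open>simp add: args_iff\<close>)

lemma iota_quot_multilinear: "quot_multilinear sV W sT m \<iota>"
  using tensor_power by (simp add: is_quot_tensor_power_def)

lemma span_iota: "T.span (\<iota> ` Args) = UNIV"
  using tensor_power by (simp add: is_quot_tensor_power_def)

lemma iota_universal:
  "quot_multilinear sV W (*) m g \<Longrightarrow> \<exists>l. Vector_Spaces.linear sT (*) l \<and> (\<forall>fs\<in>Args. g fs = l (\<iota> fs))"
  using tensor_power by (simp add: is_quot_tensor_power_def)

lemma iota_update_add:
  "fs \<in> Args \<Longrightarrow> i < m \<Longrightarrow> g \<in> Vdual \<Longrightarrow> h \<in> Vdual \<Longrightarrow>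
    \<iota> (fs[i := g + h]) = \<iota> (fs[i := g]) + \<iota> (fs[i := h])"
  using iota_quot_multilinear by (simp add: quot_multilinear_def)

lemma iota_update_scale:
  "fs \<in> Args \<Longrightarrow> i < m \<Longrightarrow> g \<in> Vdual \<Longrightarrow> \<iota> (fs[i := fscale c g]) = sT c (\<iota> (fs[i := g]))"
  using iota_quot_multilinear by (simp add: quot_multilinear_def)

lemma iota_update_diff:
  "fs \<in> Args \<Longrightarrow> i < m \<Longrightarrow> g \<in> Vdual \<Longrightarrow> h \<in> Vdual \<Longrightarrow>
    \<iota> (fs[i := g - h]) = \<iota> (fs[i := g]) - \<iota> (fs[i := h])"
  using iota_update_add[of fs i "g - h" h] dual_diff by (simp add: eq_diff_eq)

lemma iota_W: "fs \<in> Args \<Longrightarrow> i < m \<Longrightarrow> fs ! i \<in> W \<Longrightarrow> \<iota> fs = 0"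
  using iota_quot_multilinear by (auto simp: quot_multilinear_def)

lemma iota_update_W:
  assumes "fs \<in> Args" "i < m" "g \<in> W"
  shows "\<iota> (fs[i := g]) = 0"
proof (rule iota_W[OF args_update[OF assms(1)] assms(2)])
  show "g \<in> Vdual" using assms(3) W_subset_dual by blast
  show "fs[i := g] ! i \<in> W" using assms by (simp add: args_iff)
qed

lemma linear_eq_on_tensors:
  fixes scale :: "'k \<Rightarrow> 'x::ab_group_add \<Rightarrow> 'x"
  assumes "Vector_Spaces.linear sT scale A" "Vector_Spaces.linear sT scale B"
    and "\<And>fs. fs \<in> Args \<Longrightarrow> A (\<iota> fs) = B (\<iota> fs)"
  shows "A = B"
proof
  interpret vector_space_pair sT scale
    using assms(1) by (auto simp: linear_iff intro: vector_space_pair.intro)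
  fix t
  have "t \<in> T.span (\<iota> ` Args)" using span_iota by simp
  then show "A t = B t"
    by (rule linear_eq_on[OF assms(1,2)]) (use assms(3) in auto)
qed

lemma quot_multilinear_comp_linear:
  fixes sX :: "'k \<Rightarrow> 'x::ab_group_add \<Rightarrow> 'x"
  assumes G: "quot_multilinear sV W sX m G" and l: "Vector_Spaces.linear sX sY l"
  shows "quot_multilinear sV W sY m (l \<circ> G)"
proof -
  interpret L: linear sX sY l by fact
  show ?thesis
    using G unfolding quot_multilinear_def by (simp add: L.add L.scale L.zero)
qed

text \<open>The universal property only concerns scalar-valued forms; it extends to forms with
  values in any vector space X by testing against the linear functionals on X.\<close>

lemma exists_tensor_lift:
  fixes sX :: "'k \<Rightarrow> 'x::ab_group_add \<Rightarrow> 'x"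
  assumes X: "vector_space sX" and G: "quot_multilinear sV W sX m G"
  shows "\<exists>A. Vector_Spaces.linear sT sX A \<and> (\<forall>fs\<in>Args. A (\<iota> fs) = G fs)"
proof -
  interpret X: vector_space sX by fact
  interpret P: vector_space_pair sT sX ..
  obtain B where B: "B \<subseteq> \<iota> ` Args" "T.independent B" "\<iota> ` Args \<subseteq> T.span B"
    using T.maximal_independent_subset by blast
  have span_B: "T.span B = UNIV"
    using span_iota B(3) T.span_minimal[OF B(3)] by auto
  define pre where "pre b = (SOME fs. fs \<in> Args \<and> \<iota> fs = b)" for b
  have pre: "pre b \<in> Args \<and> \<iota> (pre b) = b" if "b \<in> B" for b
    unfolding pre_def by (rule someI_ex) (use that B(1) in auto)
  define A where "A = P.construct B (\<lambda>b. G (pre b))"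
  have lin_A: "Vector_Spaces.linear sT sX A"
    unfolding A_def by (rule P.linear_construct[OF B(2)])
  have "A (\<iota> fs) = G fs" if fs: "fs \<in> Args" for fs
  proof (rule ccontr)
    assume "A (\<iota> fs) \<noteq> G fs"
    then obtain h where h: "Vector_Spaces.linear sX (*) h" "h (A (\<iota> fs) - G fs) = 1"
      using X.exists_functional_vanishing_on_subspace[OF X.subspace_single_0, of "A (\<iota> fs) - G fs"]
      by auto
    interpret h: linear sX "(*)" h by fact
    obtain l where l: "Vector_Spaces.linear sT (*) l" "\<forall>fs\<in>Args. (h \<circ> G) fs = l (\<iota> fs)"
      using iota_universal[OF quot_multilinear_comp_linear[OF G h(1)]] by blast
    interpret TK: vector_space_pair sT "(*) :: 'k \<Rightarrow> 'k \<Rightarrow> 'k" ..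
    have "h \<circ> A = l"
    proof
      fix t
      have "t \<in> T.span B" using span_B by simp
      then show "(h \<circ> A) t = l t"
      proof (rule TK.linear_eq_on[OF Vector_Spaces.linear_compose[OF lin_A h(1)] l(1)])
        fix b assume b: "b \<in> B"
        then show "(h \<circ> A) b = l b"
          using l(2) pre[OF b] by (auto simp: A_def P.construct_basis[OF B(2) b])
      qed
    qed
    then have "h (A (\<iota> fs)) = h (G fs)"
      using l(2) fs by (metis comp_apply)
    then show False
      using h(2) by (simp add: h.diff)
  qed
  with lin_A show ?thesis by blast
qed

lemma ex1_tensor_endo:
  assumes "quot_multilinear sV W sT m G"
  shows "\<exists>!A. Vector_Spaces.linear sT sT A \<and> (\<forall>fs\<in>Args. A (\<iota> fs) = G fs)"
  using exists_tensor_lift[OF T.vector_space_axioms assms] linear_eq_on_tensors by metis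

abbreviation "P \<equiv> perm_op sV sT m \<iota>"
abbreviation "rep \<equiv> perm_rep sV sT m \<iota>"

lemma permute_args:
  assumes "\<sigma> \<in> Sym m" "fs \<in> Args"
  shows "permute_list (inv \<sigma>) fs \<in> Args"
proof -
  have p: "\<sigma> permutes {..<length fs}" and "length fs = m"
    using assms by (simp_all add: Sym_def args_iff)
  then have "inv \<sigma> i < m" if "i < m" for i
    using permutes_in_image[OF permutes_inv[OF p]] that by simp
  then show ?thesis
    using assms(2) p by (simp add: args_iff permute_list_inv_nth)
qed

lemma quot_multilinear_permute:
  assumes \<sigma>: "\<sigma> \<in> Sym m"
  shows "quot_multilinear sV W sT m (\<lambda>fs. \<iota> (permute_list (inv \<sigma>) fs))"
  unfolding quot_multilinear_def
proof (intro conjI ballI allI impI)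
  have p: "\<sigma> permutes {..<m}" using \<sigma> by (simp add: Sym_def)
  fix fs i assume fs: "fs \<in> Args" and i: "i < m"
  then have p': "\<sigma> permutes {..<length fs}" and i': "i < length fs" and "\<sigma> i < m"
    using p permutes_in_image[OF p] by (auto simp: args_iff)
  note upd = permute_list_inv_update[OF p' i']
  fix g h c assume "g \<in> Vdual" "h \<in> Vdual"
  then show "\<iota> (permute_list (inv \<sigma>) (fs[i := g + h])) =
          \<iota> (permute_list (inv \<sigma>) (fs[i := g])) + \<iota> (permute_list (inv \<sigma>) (fs[i := h]))"
    and "\<iota> (permute_list (inv \<sigma>) (fs[i := fscale c g])) = sT c (\<iota> (permute_list (inv \<sigma>) (fs[i := g])))"
    using \<open>\<sigma> i < m\<close> permute_args[OF \<sigma> fs] by (simp_all add: upd iota_update_add iota_update_scale)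
next
  fix fs assume fs: "fs \<in> Args" and "\<exists>i<m. fs ! i \<in> W"
  then obtain i where i: "i < m" "fs ! i \<in> W" by blast
  have p: "\<sigma> permutes {..<length fs}" using \<sigma> fs by (simp add: Sym_def args_iff)
  show "\<iota> (permute_list (inv \<sigma>) fs) = 0"
    using i fs permutes_in_image[OF p]
    by (intro iota_W[OF permute_args[OF \<sigma> fs], of "\<sigma> i"])
      (auto simp: args_iff permute_list_inv_nth_image[OF p])
qed

lemma perm_op_char:
  assumes "\<sigma> \<in> Sym m"
  shows "Vector_Spaces.linear sT sT (P \<sigma>) \<and> (\<forall>fs\<in>Args. P \<sigma> (\<iota> fs) = \<iota> (permute_list (inv \<sigma>) fs))"
  unfolding perm_op_def by (rule theI'[OF ex1_tensor_endo[OF quot_multilinear_permute[OF assms]]])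

lemma linear_perm_op: "\<sigma> \<in> Sym m \<Longrightarrow> Vector_Spaces.linear sT sT (P \<sigma>)"
  and perm_op_iota: "\<sigma> \<in> Sym m \<Longrightarrow> fs \<in> Args \<Longrightarrow> P \<sigma> (\<iota> fs) = \<iota> (permute_list (inv \<sigma>) fs)"
  using perm_op_char by blast+

lemma perm_op_comp:
  assumes \<sigma>: "\<sigma> \<in> Sym m" and \<tau>: "\<tau> \<in> Sym m"
  shows "P \<sigma> \<circ> P \<tau> = P (\<sigma> \<circ> \<tau>)"
proof (rule linear_eq_on_tensors)
  show "Vector_Spaces.linear sT sT (P \<sigma> \<circ> P \<tau>)" "Vector_Spaces.linear sT sT (P (\<sigma> \<circ> \<tau>))"
    using linear_perm_op Vector_Spaces.linear_compose Sym_comp assms by blast+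
  fix fs assume fs: "fs \<in> Args"
  have p: "\<sigma> permutes {..<m}" "\<tau> permutes {..<m}" using assms by (simp_all add: Sym_def)
  have "permute_list (inv \<sigma>) (permute_list (inv \<tau>) fs) = permute_list (inv \<tau> \<circ> inv \<sigma>) fs"
    using permutes_inv[OF p(1)] fs by (intro permute_list_compose[symmetric]) (simp add: args_iff)
  also have "inv \<tau> \<circ> inv \<sigma> = inv (\<sigma> \<circ> \<tau>)"
    using p permutes_bij by (intro o_inv_distrib[symmetric]) auto
  finally show "(P \<sigma> \<circ> P \<tau>) (\<iota> fs) = P (\<sigma> \<circ> \<tau>) (\<iota> fs)"
    using fs by (simp add: perm_op_iota \<sigma> \<tau> Sym_comp permute_args)
qed

lemma perm_op_id: "P id = id"
  by (rule linear_eq_on_tensors[where scale = sT])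
    (simp_all add: linear_perm_op id_in_Sym perm_op_iota T.linear_id)

lemma rep_apply: "rep a t = (\<Sum>\<sigma>\<in>Sym m. sT (a \<sigma>) (P \<sigma> t))"
  by (simp add: perm_rep_def)

lemma linear_rep: "Vector_Spaces.linear sT sT (rep a)"
  unfolding perm_rep_def
  by (rule TT.linear_compose_sum) (auto intro: TT.linear_compose_scale_right linear_perm_op)

lemma rep_linear_comb: "rep (\<lambda>\<sigma>. a \<sigma> + c * b \<sigma>) = (\<lambda>t. rep a t + sT c (rep b t))"
  by (rule ext) (simp add: rep_apply T.scale_left_distrib sum.distrib T.scale_sum_right)

lemma rep_one: "rep ga_one = id"
proof
  fix t
  have "rep ga_one t = (\<Sum>\<sigma>\<in>Sym m. if \<sigma> = id then P \<sigma> t else 0)"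
    unfolding rep_apply ga_one_def by (rule sum.cong) auto
  then show "rep ga_one t = id t"
    using id_in_Sym finite_Sym by (simp add: perm_op_id)
qed

lemma rep_rep_apply:
  "rep a (rep b t) = (\<Sum>\<sigma>\<in>Sym m. \<Sum>\<tau>\<in>Sym m. sT (a \<sigma> * b \<tau>) (P (\<sigma> \<circ> \<tau>) t))"
  unfolding rep_apply
proof (rule sum.cong[OF refl])
  fix \<sigma> assume \<sigma>: "\<sigma> \<in> Sym m"
  interpret L: linear sT sT "P \<sigma>" using linear_perm_op[OF \<sigma>] .
  show "sT (a \<sigma>) (P \<sigma> (\<Sum>\<tau>\<in>Sym m. sT (b \<tau>) (P \<tau> t))) = (\<Sum>\<tau>\<in>Sym m. sT (a \<sigma> * b \<tau>) (P (\<sigma> \<circ> \<tau>) t))"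
    unfolding L.sum L.scale T.scale_sum_right
    by (intro sum.cong refl) (metis T.scale_scale comp_apply perm_op_comp[OF \<sigma>])
qed

lemma rep_mult:
  assumes "a \<in> grp_alg m" "b \<in> grp_alg m"
  shows "rep (ga_mult m a b) = rep a \<circ> rep b"
proof
  fix t
  have "rep (ga_mult m a b) t = (\<Sum>\<rho>\<in>Sym m. \<Sum>\<sigma>\<in>Sym m. sT (a \<sigma> * b (inv \<sigma> \<circ> \<rho>)) (P \<rho> t))"
    unfolding rep_apply ga_mult_def by (rule sum.cong) (auto simp: T.scale_sum_left)
  also have "\<dots> = (\<Sum>\<sigma>\<in>Sym m. \<Sum>\<rho>\<in>Sym m. sT (a \<sigma> * b (inv \<sigma> \<circ> \<rho>)) (P \<rho> t))"
    by (rule sum.swap)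
  also have "\<dots> = (\<Sum>\<sigma>\<in>Sym m. \<Sum>\<tau>\<in>Sym m. sT (a \<sigma> * b \<tau>) (P (\<sigma> \<circ> \<tau>) t))"
  proof (rule sum.cong[OF refl])
    fix \<sigma> assume \<sigma>: "\<sigma> \<in> Sym m"
    have cancel: "inv \<sigma> \<circ> (\<sigma> \<circ> \<tau>) = \<tau>" for \<tau>
      using \<sigma> by (simp add: comp_assoc[symmetric] permutes_inv_o(2) Sym_def)
    show "(\<Sum>\<rho>\<in>Sym m. sT (a \<sigma> * b (inv \<sigma> \<circ> \<rho>)) (P \<rho> t)) =
        (\<Sum>\<tau>\<in>Sym m. sT (a \<sigma> * b \<tau>) (P (\<sigma> \<circ> \<tau>) t))"
      using sum.reindex_bij_betw[OF bij_betw_Sym_comp_left[OF \<sigma>],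
          of "\<lambda>\<rho>. sT (a \<sigma> * b (inv \<sigma> \<circ> \<rho>)) (P \<rho> t)"] by (simp add: cancel)
  qed
  finally show "rep (ga_mult m a b) t = (rep a \<circ> rep b) t"
    by (simp add: rep_rep_apply)
qed

section \<open>Slotwise operators and the action of gl^M\<close>

definition map_slots :: "(nat \<Rightarrow> ('v \<Rightarrow> 'k) \<Rightarrow> ('v \<Rightarrow> 'k)) \<Rightarrow> ('v \<Rightarrow> 'k) list \<Rightarrow> ('v \<Rightarrow> 'k) list" where
  "map_slots L fs = map (\<lambda>i. L i (fs ! i)) [0..<m]"

definition dual_endos :: "(nat \<Rightarrow> ('v \<Rightarrow> 'k) \<Rightarrow> ('v \<Rightarrow> 'k)) \<Rightarrow> bool" where
  "dual_endos L \<longleftrightarrow> (\<forall>i<m. dual_endo (L i))"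

lemma length_map_slots [simp]: "length (map_slots L fs) = m"
  by (simp add: map_slots_def)

lemma nth_map_slots: "i < m \<Longrightarrow> map_slots L fs ! i = L i (fs ! i)"
  by (simp add: map_slots_def)

lemma map_slots_args: "dual_endos L \<Longrightarrow> fs \<in> Args \<Longrightarrow> map_slots L fs \<in> Args"
  by (auto simp: args_iff nth_map_slots dual_endos_def dual_endo_dual)

lemma map_slots_update:
  "i < m \<Longrightarrow> length fs = m \<Longrightarrow> map_slots L (fs[i := g]) = (map_slots L fs)[i := L i g]"
  by (rule nth_equalityI) (auto simp: nth_map_slots nth_list_update)

lemma map_slots_fun_upd: "i < m \<Longrightarrow> map_slots (L(i := l)) fs = (map_slots L fs)[i := l (fs ! i)]"
  by (rule nth_equalityI) (auto simp: nth_map_slots nth_list_update)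

lemma map_slots_map_slots: "map_slots L (map_slots L' fs) = map_slots (\<lambda>i. L i \<circ> L' i) fs"
  by (rule nth_equalityI) (auto simp: nth_map_slots)

lemma map_slots_id: "length fs = m \<Longrightarrow> map_slots (\<lambda>_. id) fs = fs"
  by (rule nth_equalityI) (auto simp: nth_map_slots)

lemma dual_endos_fun_upd: "dual_endos L \<Longrightarrow> dual_endo l \<Longrightarrow> dual_endos (L(i := l))"
  by (auto simp: dual_endos_def)

lemma dual_endos_comp: "dual_endos L \<Longrightarrow> dual_endos L' \<Longrightarrow> dual_endos (\<lambda>i. L i \<circ> L' i)"
  by (auto simp: dual_endos_def dual_endo_comp)

lemma dual_endos_id: "dual_endos (\<lambda>_. id)"
  by (simp add: dual_endos_def dual_endo_id)

lemma quot_multilinear_map_slots: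
  assumes L: "dual_endos L"
  shows "quot_multilinear sV W sT m (\<lambda>fs. \<iota> (map_slots L fs))"
  unfolding quot_multilinear_def
proof (intro conjI ballI allI impI)
  fix fs i g h c assume fs: "fs \<in> Args" and i: "i < m" and g: "g \<in> Vdual" and h: "h \<in> Vdual"
  have l: "dual_endo (L i)" using L i by (simp add: dual_endos_def)
  have len: "length fs = m" using fs by (simp add: args_iff)
  note upd = map_slots_update[OF i len]
  note iota_args = map_slots_args[OF L fs] i dual_endo_dual[OF l g]
  show "\<iota> (map_slots L (fs[i := g + h])) = \<iota> (map_slots L (fs[i := g])) + \<iota> (map_slots L (fs[i := h]))"
    unfolding upd dual_endo_add[OF l g h] by (rule iota_update_add[OF iota_args dual_endo_dual[OF l h]])
  show "\<iota> (map_slots L (fs[i := fscale c g])) = sT c (\<iota> (map_slots L (fs[i := g])))"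
    unfolding upd dual_endo_scale[OF l g] by (rule iota_update_scale[OF iota_args])
next
  fix fs assume fs: "fs \<in> Args" and "\<exists>i<m. fs ! i \<in> W"
  then obtain i where i: "i < m" "fs ! i \<in> W" by blast
  then have "map_slots L fs ! i \<in> W"
    using L by (simp add: nth_map_slots dual_endos_def dual_endo_W)
  then show "\<iota> (map_slots L fs) = 0"
    by (rule iota_W[OF map_slots_args[OF L fs] i(1)])
qed

definition tmap :: "(nat \<Rightarrow> ('v \<Rightarrow> 'k) \<Rightarrow> ('v \<Rightarrow> 'k)) \<Rightarrow> 't \<Rightarrow> 't" where
  "tmap L = (THE A. Vector_Spaces.linear sT sT A \<and> (\<forall>fs\<in>Args. A (\<iota> fs) = \<iota> (map_slots L fs)))"

lemma tmap_char:
  assumes "dual_endos L"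
  shows "Vector_Spaces.linear sT sT (tmap L) \<and> (\<forall>fs\<in>Args. tmap L (\<iota> fs) = \<iota> (map_slots L fs))"
  unfolding tmap_def by (rule theI'[OF ex1_tensor_endo[OF quot_multilinear_map_slots[OF assms]]])

lemma linear_tmap: "dual_endos L \<Longrightarrow> Vector_Spaces.linear sT sT (tmap L)"
  and tmap_iota: "dual_endos L \<Longrightarrow> fs \<in> Args \<Longrightarrow> tmap L (\<iota> fs) = \<iota> (map_slots L fs)"
  using tmap_char by blast+

lemma tmap_comp:
  assumes L: "dual_endos L" and L': "dual_endos L'"
  shows "tmap L (tmap L' t) = tmap (\<lambda>i. L i \<circ> L' i) t"
proof -
  have "tmap L \<circ> tmap L' = tmap (\<lambda>i. L i \<circ> L' i)"
  proof (rule linear_eq_on_tensors)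
    show "Vector_Spaces.linear sT sT (tmap L \<circ> tmap L')"
      using linear_tmap[OF L] linear_tmap[OF L'] by (rule Vector_Spaces.linear_compose[rotated])
    show "Vector_Spaces.linear sT sT (tmap (\<lambda>i. L i \<circ> L' i))"
      by (rule linear_tmap[OF dual_endos_comp[OF L L']])
  qed (simp add: tmap_iota L L' dual_endos_comp map_slots_args map_slots_map_slots)
  then show ?thesis by (metis comp_apply)
qed

lemma tmap_id: "tmap (\<lambda>_. id) = id"
  by (rule linear_eq_on_tensors[where scale = sT])
    (simp_all add: linear_tmap dual_endos_id T.linear_id tmap_iota map_slots_id args_iff)

lemma tmap_cong:
  assumes "dual_endos L" "dual_endos L'" "\<And>i f. i < m \<Longrightarrow> f \<in> Vdual \<Longrightarrow> L i f = L' i f"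
  shows "tmap L = tmap L'"
proof (rule linear_eq_on_tensors)
  fix fs assume fs: "fs \<in> Args"
  then have "map_slots L fs = map_slots L' fs"
    using assms(3) by (intro nth_equalityI) (auto simp: nth_map_slots args_iff)
  then show "tmap L (\<iota> fs) = tmap L' (\<iota> fs)"
    using assms fs by (simp add: tmap_iota)
qed (use assms linear_tmap in blast)+

lemma tmap_zero_slot:
  assumes L: "dual_endos L" and i: "i < m" and W: "\<And>f. f \<in> Vdual \<Longrightarrow> L i f \<in> W"
  shows "tmap L = (\<lambda>_. 0)"
proof (rule linear_eq_on_tensors[where scale = sT])
  fix fs assume fs: "fs \<in> Args"
  then have "map_slots L fs ! i \<in> W"
    using i W by (simp add: nth_map_slots args_iff)
  then show "tmap L (\<iota> fs) = 0"
    using iota_W[OF map_slots_args[OF L fs] i] L fs by (simp add: tmap_iota)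
qed (simp_all add: linear_tmap L TT.linear_zero)

lemma iota_update_sum:
  assumes fs: "fs \<in> Args" and i: "i < m" and g: "\<And>k. k \<in> K \<Longrightarrow> g k \<in> Vdual"
  shows "\<iota> (fs[i := \<Sum>k\<in>K. g k]) = (\<Sum>k\<in>K. \<iota> (fs[i := g k]))"
  using g
proof (induct K rule: infinite_finite_induct)
  case (insert k K)
  have "\<iota> (fs[i := \<Sum>k\<in>insert k K. g k]) = \<iota> (fs[i := g k + (\<Sum>k\<in>K. g k)])"
    by (simp only: sum.insert[OF insert(1,2)])
  also have "\<dots> = \<iota> (fs[i := g k]) + \<iota> (fs[i := \<Sum>k\<in>K. g k])"
    using insert(4) by (intro iota_update_add[OF fs i]) (auto intro: dual_sum)
  also have "\<dots> = (\<Sum>k\<in>insert k K. \<iota> (fs[i := g k]))"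
    using insert by simp
  finally show ?case .
qed (use iota_update_W[OF fs i W_zero] in simp_all)

lemma iota_scale_slots:
  assumes es: "es \<in> Args"
  shows "\<iota> (map (\<lambda>l. fscale (a l) (es ! l)) [0..<m]) = sT (\<Prod>l<m. a l) (\<iota> es)"
proof -
  have prefix: "\<iota> (map (\<lambda>l. if l < r then fscale (a l) (es ! l) else es ! l) [0..<m]) = sT (\<Prod>l<r. a l) (\<iota> es)"
    if "r \<le> m" for r
    using that
  proof (induct r)
    case 0
    have "map (\<lambda>l. if l < 0 then fscale (a l) (es ! l) else es ! l) [0..<m] = es"
      using es by (intro nth_equalityI) (auto simp: args_iff)
    then show ?case by simp
  next
    case (Suc r)
    then have r: "r < m" by simp
    let ?es = "map (\<lambda>l. if l < r then fscale (a l) (es ! l) else es ! l) [0..<m]"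
    have es': "?es \<in> Args"
      using es by (auto simp: args_iff dual_scale)
    have "map (\<lambda>l. if l < Suc r then fscale (a l) (es ! l) else es ! l) [0..<m] = ?es[r := fscale (a r) (es ! r)]"
      by (intro nth_equalityI) (auto simp: nth_list_update r)
    moreover have "?es ! r = es ! r"
      using r by simp
    then have "?es[r := es ! r] = ?es"
      using list_update_id[of ?es r] by simp
    ultimately show ?case
      using iota_update_scale[OF es' r, of "es ! r" "a r"] Suc.hyps r es
      by (simp add: args_iff T.scale_scale mult.commute)
  qed
  have "map (\<lambda>l. if l < m then fscale (a l) (es ! l) else es ! l) [0..<m]
      = map (\<lambda>l. fscale (a l) (es ! l)) [0..<m]"
    by (rule map_cong) auto
  with prefix[OF order_refl] show ?thesis
    by simp
qed

lemma tmap_slot_sum: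
  assumes L: "dual_endos L" and i: "i < m" and l: "\<And>k. k \<in> K \<Longrightarrow> dual_endo (l k)"
  shows "tmap (L(i := (\<lambda>f. \<Sum>k\<in>K. l k f))) t = (\<Sum>k\<in>K. tmap (L(i := l k)) t)"
proof -
  have L_sum: "dual_endos (L(i := (\<lambda>f. \<Sum>k\<in>K. l k f)))"
    by (rule dual_endos_fun_upd[OF L dual_endo_sum[OF l]])
  have "tmap (L(i := (\<lambda>f. \<Sum>k\<in>K. l k f))) = (\<lambda>t. \<Sum>k\<in>K. tmap (L(i := l k)) t)"
  proof (rule linear_eq_on_tensors)
    show "Vector_Spaces.linear sT sT (\<lambda>t. \<Sum>k\<in>K. tmap (L(i := l k)) t)"
      by (rule TT.linear_compose_sum) (use linear_tmap dual_endos_fun_upd[OF L] l in blast)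
    fix fs assume fs: "fs \<in> Args"
    then have "l k (fs ! i) \<in> Vdual" if "k \<in> K" for k
      using i l[OF that] by (simp add: args_iff dual_endo_dual)
    then show "tmap (L(i := (\<lambda>f. \<Sum>k\<in>K. l k f))) (\<iota> fs) = (\<Sum>k\<in>K. tmap (L(i := l k)) (\<iota> fs))"
      using fs i L_sum dual_endos_fun_upd[OF L l]
      by (simp add: tmap_iota map_slots_fun_upd iota_update_sum[OF map_slots_args[OF L fs] i])
  qed (use L_sum linear_tmap in blast)
  then show ?thesis by simp
qed

lemma tmap_slot_diff:
  assumes L: "dual_endos L" and i: "i < m" and a: "dual_endo a" and b: "dual_endo b"
  shows "tmap (L(i := (\<lambda>f. a f - b f))) t = tmap (L(i := a)) t - tmap (L(i := b)) t"
proof -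
  have L_diff: "dual_endos (L(i := (\<lambda>f. a f - b f)))"
    by (rule dual_endos_fun_upd[OF L dual_endo_diff[OF a b]])
  have "tmap (L(i := (\<lambda>f. a f - b f))) = (\<lambda>t. tmap (L(i := a)) t - tmap (L(i := b)) t)"
  proof (rule linear_eq_on_tensors)
    show "Vector_Spaces.linear sT sT (\<lambda>t. tmap (L(i := a)) t - tmap (L(i := b)) t)"
      by (intro TT.linear_compose_sub linear_tmap dual_endos_fun_upd L a b)
    fix fs assume fs: "fs \<in> Args"
    have "fs ! i \<in> Vdual" using fs i by (simp add: args_iff)
    then show "tmap (L(i := (\<lambda>f. a f - b f))) (\<iota> fs) = tmap (L(i := a)) (\<iota> fs) - tmap (L(i := b)) (\<iota> fs)"
      using fs i L_diff dual_endos_fun_upd[OF L a] dual_endos_fun_upd[OF L b] map_slots_args[OF L fs]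
      by (simp add: tmap_iota map_slots_fun_upd iota_update_diff dual_endo_dual a b)
  qed (use L_diff linear_tmap in blast)
  then show ?thesis by simp
qed

definition slot :: "nat \<Rightarrow> (('v \<Rightarrow> 'k) \<Rightarrow> ('v \<Rightarrow> 'k)) \<Rightarrow> nat \<Rightarrow> ('v \<Rightarrow> 'k) \<Rightarrow> ('v \<Rightarrow> 'k)" where
  "slot i l = (\<lambda>_. id)(i := l)"

lemma dual_endos_slot: "dual_endo l \<Longrightarrow> dual_endos (slot i l)"
  unfolding slot_def by (rule dual_endos_fun_upd[OF dual_endos_id])

lemma map_slots_slot: "i < m \<Longrightarrow> length fs = m \<Longrightarrow> map_slots (slot i l) fs = fs[i := l (fs ! i)]"
  unfolding slot_def by (simp add: map_slots_fun_upd map_slots_id)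

definition gl_act :: "('v \<Rightarrow> 'v) \<Rightarrow> 't \<Rightarrow> 't" where
  "gl_act \<phi> t = (\<Sum>i<m. tmap (slot i (dact \<phi>)) t)"

lemma linear_gl_act: "\<phi> \<in> glM sV W \<Longrightarrow> Vector_Spaces.linear sT sT (gl_act \<phi>)"
  unfolding gl_act_def[abs_def]
  by (rule TT.linear_compose_sum) (use linear_tmap dual_endos_slot dual_endo_dact in blast)

lemma gl_act_iota:
  "\<phi> \<in> glM sV W \<Longrightarrow> fs \<in> Args \<Longrightarrow> gl_act \<phi> (\<iota> fs) = (\<Sum>i<m. \<iota> (fs[i := dact \<phi> (fs ! i)]))"
  unfolding gl_act_def
  by (rule sum.cong) (auto simp: tmap_iota dual_endos_slot dual_endo_dact map_slots_slot args_iff)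

lemma tens_act_gl_act: "\<phi> \<in> glM sV W \<Longrightarrow> tens_act sV sT m \<iota> \<phi> (gl_act \<phi>)"
  unfolding tens_act_def using linear_gl_act gl_act_iota by blast

lemma tens_act_eq_gl_act: "\<phi> \<in> glM sV W \<Longrightarrow> tens_act sV sT m \<iota> \<phi> A \<Longrightarrow> A = gl_act \<phi>"
  by (rule linear_eq_on_tensors) (auto simp: tens_act_def linear_gl_act gl_act_iota)

lemma perm_op_gl_act_commute:
  assumes \<sigma>: "\<sigma> \<in> Sym m" and \<phi>: "\<phi> \<in> glM sV W"
  shows "P \<sigma> \<circ> gl_act \<phi> = gl_act \<phi> \<circ> P \<sigma>"
proof (rule linear_eq_on_tensors)
  show "Vector_Spaces.linear sT sT (P \<sigma> \<circ> gl_act \<phi>)" "Vector_Spaces.linear sT sT (gl_act \<phi> \<circ> P \<sigma>)"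
    using linear_perm_op[OF \<sigma>] linear_gl_act[OF \<phi>] Vector_Spaces.linear_compose by blast+
  fix fs assume fs: "fs \<in> Args"
  let ?d = "dact \<phi>" and ?gs = "permute_list (inv \<sigma>) fs"
  interpret L: linear sT sT "P \<sigma>" using linear_perm_op[OF \<sigma>] .
  have p: "\<sigma> permutes {..<length fs}" and len: "length fs = m"
    using \<sigma> fs by (simp_all add: Sym_def args_iff)
  have d: "?d (fs ! i) \<in> Vdual" if "i < m" for i
    using dual_endo_dual[OF dual_endo_dact[OF \<phi>]] fs that by (simp add: args_iff)
  have "(P \<sigma> \<circ> gl_act \<phi>) (\<iota> fs) = (\<Sum>i<m. \<iota> (?gs[\<sigma> i := ?d (fs ! i)]))"
    using d fs len p by (simp add: gl_act_iota[OF \<phi> fs] L.sum perm_op_iota[OF \<sigma>] args_update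
        permute_list_inv_update)
  also have "\<dots> = (\<Sum>i<m. \<iota> (?gs[\<sigma> i := ?d (?gs ! \<sigma> i)]))"
    using p len by (simp add: permute_list_inv_nth_image)
  also have "\<dots> = (\<Sum>j<m. \<iota> (?gs[j := ?d (?gs ! j)]))"
    using p len by (intro sum.reindex_bij_betw permutes_imp_bij) simp
  also have "\<dots> = (gl_act \<phi> \<circ> P \<sigma>) (\<iota> fs)"
    by (simp add: perm_op_iota[OF \<sigma> fs] gl_act_iota[OF \<phi> permute_args[OF \<sigma> fs]])
  finally show "(P \<sigma> \<circ> gl_act \<phi>) (\<iota> fs) = (gl_act \<phi> \<circ> P \<sigma>) (\<iota> fs)" .
qed

lemma rep_gl_act_commute:
  assumes \<phi>: "\<phi> \<in> glM sV W"
  shows "rep a (gl_act \<phi> t) = gl_act \<phi> (rep a t)"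
proof -
  interpret A: linear sT sT "gl_act \<phi>" using linear_gl_act[OF \<phi>] .
  have "P \<sigma> (gl_act \<phi> t) = gl_act \<phi> (P \<sigma> t)" if "\<sigma> \<in> Sym m" for \<sigma>
    using fun_cong[OF perm_op_gl_act_commute[OF that \<phi>], of t] by simp
  then show ?thesis
    by (simp add: rep_apply A.sum A.scale)
qed

lemma rep_in_gl_end: "rep a \<in> gl_end sV W sT m \<iota>"
  unfolding gl_end_def
proof (intro CollectI conjI ballI allI impI linear_rep)
  fix \<phi> A assume "\<phi> \<in> glM sV W" "tens_act sV sT m \<iota> \<phi> A"
  then have "A = gl_act \<phi>"
    by (rule tens_act_eq_gl_act)
  with \<open>\<phi> \<in> glM sV W\<close> show "rep a \<circ> A = A \<circ> rep a"
    by (simp add: rep_gl_act_commute fun_eq_iff)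
qed

lemma gl_end_commute:
  assumes "E \<in> gl_end sV W sT m \<iota>" "\<phi> \<in> glM sV W"
  shows "E (gl_act \<phi> t) = gl_act \<phi> (E t)"
proof -
  have "E \<circ> gl_act \<phi> = gl_act \<phi> \<circ> E"
    using assms tens_act_gl_act unfolding gl_end_def by blast
  then show ?thesis
    by (metis comp_apply)
qed

lemma linear_gl_end: "E \<in> gl_end sV W sT m \<iota> \<Longrightarrow> Vector_Spaces.linear sT sT E"
  unfolding gl_end_def by blast

end

section \<open>Residue classes of the dual basis\<close>

locale mackey_tensor_power =
  mackey_dual_bases sV W vb ws + quot_tensor_power sV W sT \<iota> m
  for sV :: "'k::field \<Rightarrow> 'v::ab_group_add \<Rightarrow> 'v" and W vb ws
    and sT :: "'k \<Rightarrow> 't::ab_group_add \<Rightarrow> 't" and \<iota> m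
begin

text \<open>In the notation of the proof idea, cls_fun k is e_k and generic is x.\<close>

definition cls_fun :: "nat \<Rightarrow> 'v \<Rightarrow> 'k" where
  "cls_fun k = coord_fun (\<lambda>n. if n mod m = k then 1 else 0)"

lemma cls_fun_dual: "cls_fun k \<in> Vdual"
  by (simp add: cls_fun_def coord_fun_dual)

lemma cls_fun_vb: "cls_fun k (vb n) = (if n mod m = k then 1 else 0)"
  by (simp add: cls_fun_def)

lemma cls_fun_notin_W:
  assumes "k < m"
  shows "cls_fun k \<notin> W"
proof
  assume "cls_fun k \<in> W"
  then have "finite (coord_supp (cls_fun k))"
    by (rule finite_coord_supp_W)
  moreover have "range (\<lambda>j. k + m * j) \<subseteq> coord_supp (cls_fun k)"
    using assms by (auto simp: coord_supp_def cls_fun_vb)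
  moreover have "infinite (range (\<lambda>j. k + m * j))"
    by (rule range_inj_infinite) (use assms in \<open>auto simp: inj_def\<close>)
  ultimately show False
    using finite_subset by blast
qed

definition cls_proj :: "nat \<Rightarrow> 'v \<Rightarrow> 'v" where
  "cls_proj k = basis_map (\<lambda>j. if j mod m = k then vb j else 0)"

lemma cls_proj_glM: "cls_proj k \<in> glM sV W"
  unfolding cls_proj_def
proof (rule basis_map_glM)
  fix f assume f: "f \<in> W"
  have "{j. f (if j mod m = k then vb j else 0) \<noteq> 0} \<subseteq> coord_supp f"
    using dual_zero_apply W_subset_dual f by (auto simp: coord_supp_def)
  then show "finite {j. f (if j mod m = k then vb j else 0) \<noteq> 0}"
    using finite_coord_supp_W[OF f] finite_subset by blast
qed

definition cls_part :: "nat \<Rightarrow> ('v \<Rightarrow> 'k) \<Rightarrow> ('v \<Rightarrow> 'k)" where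
  "cls_part k f = f \<circ> cls_proj k"

lemma dual_endo_cls_part: "dual_endo (cls_part k)"
  unfolding cls_part_def[abs_def] by (rule dual_endo_comp_glM[OF cls_proj_glM])

lemma cls_part_dual: "f \<in> Vdual \<Longrightarrow> cls_part k f \<in> Vdual"
  by (rule dual_endo_dual[OF dual_endo_cls_part])

lemma cls_part_vb: "f \<in> Vdual \<Longrightarrow> cls_part k f (vb j) = (if j mod m = k then f (vb j) else 0)"
  by (simp add: cls_part_def cls_proj_def dual_zero_apply)

lemma cls_part_add: "cls_part k (f + g) = cls_part k f + cls_part k g"
  and cls_part_scale: "cls_part k (fscale c f) = fscale c (cls_part k f)"
  and cls_part_neg: "cls_part k (- f) = - cls_part k f"
  by (simp_all add: cls_part_def fun_eq_iff)

lemma dact_cls_proj: "dact (cls_proj k) f = - cls_part k f"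
  by (simp add: dact_eq_neg_comp cls_part_def)

lemma cls_part_cls_part: "f \<in> Vdual \<Longrightarrow> cls_part l (cls_part k f) = (if l = k then cls_part k f else 0)"
  by (rule dual_eqI) (auto simp: cls_part_dual cls_part_vb dual_zero)

lemma cls_part_cls_fun: "cls_part l (cls_fun k) = (if l = k then cls_fun k else 0)"
  by (rule dual_eqI) (auto simp: cls_part_dual cls_fun_dual cls_part_vb cls_fun_vb dual_zero)

lemma sum_cls_part:
  assumes "m > 0" "f \<in> Vdual"
  shows "(\<Sum>k<m. cls_part k f) = f"
proof (rule dual_eqI)
  show "(\<Sum>k<m. cls_part k f) \<in> Vdual"
    by (rule dual_sum) (simp add: cls_part_dual assms)
  fix n
  have "(\<Sum>k<m. cls_part k f) (vb n) = (\<Sum>k<m. if n mod m = k then f (vb n) else 0)"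
    by (simp add: sum_fun_apply cls_part_vb assms)
  then show "(\<Sum>k<m. cls_part k f) (vb n) = f (vb n)"
    using assms(1) by simp
qed (use assms in simp)

definition cls_shift :: "nat \<Rightarrow> 'v \<Rightarrow> 'v" where
  "cls_shift k = basis_map (\<lambda>j. if j mod m = k then vb (j + m) - vb j else 0)"

lemma cls_shift_glM: "cls_shift k \<in> glM sV W"
  unfolding cls_shift_def
proof (rule basis_map_glM)
  fix f assume f: "f \<in> W"
  then have fv: "f \<in> Vdual" using W_subset_dual by blast
  have "{j. f (if j mod m = k then vb (j + m) - vb j else 0) \<noteq> 0}
      \<subseteq> coord_supp f \<union> (\<lambda>n. n - m) ` coord_supp f"
  proof
    fix j assume "j \<in> {j. f (if j mod m = k then vb (j + m) - vb j else 0) \<noteq> 0}"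
    then have "f (vb (j + m)) \<noteq> 0 \<or> f (vb j) \<noteq> 0"
      by (auto simp: dual_diff_apply[OF fv] dual_zero_apply[OF fv] split: if_splits)
    then show "j \<in> coord_supp f \<union> (\<lambda>n. n - m) ` coord_supp f"
      by (auto simp: coord_supp_def intro!: image_eqI[where x = "j + m"])
  qed
  then show "finite {j. f (if j mod m = k then vb (j + m) - vb j else 0) \<noteq> 0}"
    using finite_coord_supp_W[OF f] finite_subset by blast
qed

definition shift_diff :: "nat \<Rightarrow> ('v \<Rightarrow> 'k) \<Rightarrow> ('v \<Rightarrow> 'k)" where
  "shift_diff k = dact (cls_shift k)"

lemma dual_endo_shift_diff: "dual_endo (shift_diff k)"
  unfolding shift_diff_def by (rule dual_endo_dact[OF cls_shift_glM])

lemma shift_diff_vb: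
  "f \<in> Vdual \<Longrightarrow> shift_diff k f (vb j) = (if j mod m = k then f (vb j) - f (vb (j + m)) else 0)"
  by (simp add: shift_diff_def dact_def cls_shift_def dual_diff_apply dual_zero_apply)

lemma shift_diff_dual: "f \<in> Vdual \<Longrightarrow> shift_diff k f \<in> Vdual"
  by (rule dual_endo_dual[OF dual_endo_shift_diff])

lemma shift_diff_cls_fun: "shift_diff l (cls_fun k) = 0"
  by (rule dual_eqI) (auto simp: shift_diff_dual cls_fun_dual shift_diff_vb cls_fun_vb dual_zero)

lemma cls_part_shift_diff: "f \<in> Vdual \<Longrightarrow> cls_part l (shift_diff k f) = (if l = k then shift_diff k f else 0)"
  by (rule dual_eqI) (auto simp: cls_part_dual shift_diff_dual shift_diff_vb cls_part_vb dual_zero)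

lemma shift_diff_cls_part: "f \<in> Vdual \<Longrightarrow> shift_diff k (cls_part k f) = shift_diff k f"
  by (rule dual_eqI) (auto simp: cls_part_dual shift_diff_dual shift_diff_vb cls_part_vb)

definition cls_spread :: "nat \<Rightarrow> (nat \<Rightarrow> 'k) \<Rightarrow> 'v \<Rightarrow> 'v" where
  "cls_spread i c = basis_map (\<lambda>j. sV (c j) (vb (i + m * j)))"

lemma cls_spread_glM:
  assumes "m > 0"
  shows "cls_spread i c \<in> glM sV W"
  unfolding cls_spread_def
proof (rule basis_map_glM)
  fix f assume f: "f \<in> W"
  then have fv: "f \<in> Vdual" using W_subset_dual by blast
  have "{j. f (sV (c j) (vb (i + m * j))) \<noteq> 0} \<subseteq> (\<lambda>n. (n - i) div m) ` coord_supp f"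
  proof
    fix j assume "j \<in> {j. f (sV (c j) (vb (i + m * j))) \<noteq> 0}"
    then have "f (vb (i + m * j)) \<noteq> 0" by (auto simp: dual_scale_apply[OF fv])
    moreover have "j = ((i + m * j) - i) div m" using assms by simp
    ultimately show "j \<in> (\<lambda>n. (n - i) div m) ` coord_supp f"
      unfolding coord_supp_def by (intro image_eqI[where x = "i + m * j"]) auto
  qed
  then show "finite {j. f (sV (c j) (vb (i + m * j))) \<noteq> 0}"
    using finite_coord_supp_W[OF f] finite_subset by blast
qed

lemma dact_cls_spread_cls_fun:
  assumes "i < m" "k < m"
  shows "dact (cls_spread i c) (cls_fun k) = (if k = i then coord_fun (\<lambda>j. - c j) else 0)"
proof (rule dual_eqI)
  show "dact (cls_spread i c) (cls_fun k) \<in> Vdual"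
    using dual_endo_dual[OF dual_endo_dact[OF cls_spread_glM]] cls_fun_dual assms by auto
  fix n
  have "(i + m * n) mod m = i" using assms by simp
  then show "dact (cls_spread i c) (cls_fun k) (vb n) = (if k = i then coord_fun (\<lambda>j. - c j) else 0) (vb n)"
    by (auto simp: dact_def cls_spread_def dual_scale_apply[OF cls_fun_dual] cls_fun_vb)
qed (simp add: coord_fun_dual dual_zero)

definition quot_coeff :: "nat \<Rightarrow> ('v \<Rightarrow> 'k) \<Rightarrow> 'k" where
  "quot_coeff k = (SOME l. Vector_Spaces.linear fscale (*) l \<and> l (cls_fun k) = 1 \<and> (\<forall>w\<in>W. l w = 0))"

lemma quot_coeff:
  assumes "k < m"
  shows "Vector_Spaces.linear fscale (*) (quot_coeff k) \<and> quot_coeff k (cls_fun k) = 1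
    \<and> (\<forall>w\<in>W. quot_coeff k w = 0)"
  unfolding quot_coeff_def
  by (rule someI_ex[OF F.exists_functional_vanishing_on_subspace[OF W_subspace cls_fun_notin_W[OF assms]]])

definition cls_coeff :: "nat \<Rightarrow> ('v \<Rightarrow> 'k) \<Rightarrow> 'k" where
  "cls_coeff k f = quot_coeff k (cls_part k f)"

lemma cls_coeff_add: "k < m \<Longrightarrow> cls_coeff k (f + g) = cls_coeff k f + cls_coeff k g"
  and cls_coeff_scale: "k < m \<Longrightarrow> cls_coeff k (fscale c f) = c * cls_coeff k f"
  unfolding cls_coeff_def cls_part_add cls_part_scale using quot_coeff linear_iff by metis+

lemma cls_coeff_diff: "k < m \<Longrightarrow> cls_coeff k (f - g) = cls_coeff k f - cls_coeff k g"
  by (metis add_diff_cancel_right' diff_add_cancel cls_coeff_add)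

lemma cls_coeff_W: "k < m \<Longrightarrow> w \<in> W \<Longrightarrow> cls_coeff k w = 0"
  unfolding cls_coeff_def using quot_coeff dual_endo_W[OF dual_endo_cls_part] by blast

lemma cls_coeff_cls_fun: "k < m \<Longrightarrow> cls_coeff k (cls_fun l) = (if l = k then 1 else 0)"
  unfolding cls_coeff_def cls_part_cls_fun using quot_coeff W_zero by auto

lemma cls_coeff_cls_part: "k < m \<Longrightarrow> f \<in> Vdual \<Longrightarrow> cls_coeff k (cls_part k f) = cls_coeff k f"
  unfolding cls_coeff_def by (simp add: cls_part_cls_part)

definition coeff_part :: "nat \<Rightarrow> ('v \<Rightarrow> 'k) \<Rightarrow> ('v \<Rightarrow> 'k)" where
  "coeff_part k f = fscale (cls_coeff k f) (cls_fun k)"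

lemma dual_endo_coeff_part:
  assumes "k < m"
  shows "dual_endo (coeff_part k)"
proof (rule dual_endoI)
  show "coeff_part k f \<in> Vdual" for f
    unfolding coeff_part_def by (rule dual_scale[OF cls_fun_dual])
  show "coeff_part k (f + g) = coeff_part k f + coeff_part k g" for f g
    by (simp add: coeff_part_def cls_coeff_add[OF assms] fun_eq_iff distrib_right)
  show "coeff_part k (fscale c f) = fscale c (coeff_part k f)" for c f
    by (simp add: coeff_part_def cls_coeff_scale[OF assms] fun_eq_iff)
  show "coeff_part k w \<in> W" if "w \<in> W" for w
    using cls_coeff_W[OF assms that] W_zero by (simp add: coeff_part_def zero_fun_def)
qed

definition partial_sums :: "nat \<Rightarrow> ('v \<Rightarrow> 'k) \<Rightarrow> ('v \<Rightarrow> 'k)" where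
  "partial_sums k g =
     coord_fun (\<lambda>j. if j mod m = k then (\<Sum>l\<in>{l. l < j \<and> l mod m = k}. g (vb l)) else 0)"

lemma partial_sums_dual: "partial_sums k g \<in> Vdual"
  unfolding partial_sums_def by (rule coord_fun_dual)

lemma partial_sums_vb:
  "partial_sums k g (vb j) = (if j mod m = k then (\<Sum>l\<in>{l. l < j \<and> l mod m = k}. g (vb l)) else 0)"
  by (simp add: partial_sums_def)

lemma partial_sums_add: "partial_sums k (f + g) = partial_sums k f + partial_sums k g"
  by (rule dual_eqI) (auto simp: partial_sums_dual dual_add partial_sums_vb sum.distrib)

lemma partial_sums_scale: "partial_sums k (fscale c f) = fscale c (partial_sums k f)"
  by (rule dual_eqI) (auto simp: partial_sums_dual dual_scale partial_sums_vb sum_distrib_left)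

text \<open>For finitely supported w the partial sums are eventually constant, so they agree
  with a multiple of the class functional up to finitely many coordinates.\<close>

lemma partial_sums_W:
  assumes w: "w \<in> W"
  shows "partial_sums k w - fscale (\<Sum>l\<in>{l \<in> coord_supp w. l mod m = k}. w (vb l)) (cls_fun k) \<in> W"
    (is "?d \<in> W")
proof -
  let ?c = "\<Sum>l\<in>{l \<in> coord_supp w. l mod m = k}. w (vb l)"
  obtain N where N: "coord_supp w \<subseteq> {..<N}"
    using finite_coord_supp_W[OF w] by (meson finite_nat_iff_bounded subset_eq lessThan_iff)
  have "?d (vb j) = 0" if j: "N \<le> j" for j
  proof -
    have "(\<Sum>l\<in>{l. l < j \<and> l mod m = k}. w (vb l)) = (\<Sum>l\<in>{l. l < j \<and> l mod m = k} \<inter> coord_supp w. w (vb l))"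
      by (rule sum.mono_neutral_right) (auto simp: coord_supp_def)
    also have "{l. l < j \<and> l mod m = k} \<inter> coord_supp w = {l \<in> coord_supp w. l mod m = k}"
      using N j by auto
    finally show ?thesis
      by (simp add: partial_sums_vb cls_fun_vb)
  qed
  then have "coord_supp ?d \<subseteq> {..<N}"
    by (auto simp: coord_supp_def not_less[symmetric])
  then show ?thesis
    by (intro W_if_finite_coord_supp dual_diff partial_sums_dual dual_scale cls_fun_dual)
      (rule finite_subset, auto)
qed

definition shift_diff_inv :: "nat \<Rightarrow> ('v \<Rightarrow> 'k) \<Rightarrow> ('v \<Rightarrow> 'k)" where
  "shift_diff_inv k g = fscale (cls_coeff k (partial_sums k g)) (cls_fun k) - partial_sums k g"

lemma dual_endo_shift_diff_inv:
  assumes k: "k < m"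
  shows "dual_endo (shift_diff_inv k)"
proof (rule dual_endoI)
  show "shift_diff_inv k f \<in> Vdual" for f
    unfolding shift_diff_inv_def by (intro dual_diff dual_scale cls_fun_dual partial_sums_dual)
  show "shift_diff_inv k (f + g) = shift_diff_inv k f + shift_diff_inv k g" for f g
    unfolding shift_diff_inv_def partial_sums_add by (simp add: cls_coeff_add[OF k] fun_eq_iff algebra_simps)
  show "shift_diff_inv k (fscale c f) = fscale c (shift_diff_inv k f)" for c f
    unfolding shift_diff_inv_def partial_sums_scale by (simp add: cls_coeff_scale[OF k] fun_eq_iff algebra_simps)
  show "shift_diff_inv k w \<in> W" if w: "w \<in> W" for w
  proof -
    define c where "c = (\<Sum>l\<in>{l \<in> coord_supp w. l mod m = k}. w (vb l))"
    define w' where "w' = partial_sums k w - fscale c (cls_fun k)"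
    have w': "w' \<in> W"
      unfolding w'_def c_def by (rule partial_sums_W[OF w])
    have ps: "partial_sums k w = w' + fscale c (cls_fun k)"
      by (simp add: w'_def)
    have "cls_coeff k (partial_sums k w) = c"
      unfolding ps by (simp add: cls_coeff_add[OF k] cls_coeff_scale[OF k] cls_coeff_W[OF k w'] cls_coeff_cls_fun[OF k])
    then have "shift_diff_inv k w = - w'"
      unfolding shift_diff_inv_def by (simp add: ps fun_eq_iff)
    then show ?thesis using W_neg[OF w'] by simp
  qed
qed

lemma partial_sums_shift_diff:
  assumes k: "k < m" and f: "f \<in> Vdual"
  shows "partial_sums k (shift_diff k f) = fscale (f (vb k)) (cls_fun k) - cls_part k f"
proof (rule dual_eqI)
  fix j
  show "partial_sums k (shift_diff k f) (vb j) = (fscale (f (vb k)) (cls_fun k) - cls_part k f) (vb j)"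
  proof (cases "j mod m = k")
    case True
    have "partial_sums k (shift_diff k f) (vb j) = (\<Sum>l\<in>{l. l < j \<and> l mod m = k}. f (vb l) - f (vb (l + m)))"
      using True by (simp add: partial_sums_vb shift_diff_vb[OF f])
    also have "\<dots> = f (vb k) - f (vb j)"
      by (rule sum_residue_class_telescope[OF k True])
    finally show ?thesis using True by (simp add: cls_fun_vb cls_part_vb[OF f])
  qed (simp add: partial_sums_vb cls_fun_vb cls_part_vb[OF f])
qed (use f in \<open>simp_all add: partial_sums_dual dual_diff dual_scale cls_fun_dual cls_part_dual\<close>)

lemma shift_diff_inv_shift_diff:
  assumes k: "k < m" and f: "f \<in> Vdual"
  shows "shift_diff_inv k (shift_diff k f) = cls_part k f - coeff_part k f"
proof -
  have coeff: "cls_coeff k (fscale (f (vb k)) (cls_fun k) - cls_part k f) = f (vb k) - cls_coeff k f"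
    by (simp add: cls_coeff_diff[OF k] cls_coeff_scale[OF k] cls_coeff_cls_fun[OF k] cls_coeff_cls_part[OF k f])
  show ?thesis
    unfolding shift_diff_inv_def coeff_part_def partial_sums_shift_diff[OF k f] coeff
    by (simp add: fun_eq_iff algebra_simps)
qed

section \<open>The generic tensor is cyclic\<close>

definition generic_args :: "('v \<Rightarrow> 'k) list" where
  "generic_args = map cls_fun [0..<m]"

definition generic :: 't where
  "generic = \<iota> generic_args"

lemma length_generic_args [simp]: "length generic_args = m"
  by (simp add: generic_args_def)

lemma nth_generic_args: "i < m \<Longrightarrow> generic_args ! i = cls_fun i"
  by (simp add: generic_args_def)

lemma generic_args: "generic_args \<in> Args"
  by (simp add: args_iff nth_generic_args cls_fun_dual)

lemma gl_act_cls_proj_generic: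
  assumes k: "k < m"
  shows "gl_act (cls_proj k) generic = - generic"
proof -
  have "\<iota> (generic_args[i := dact (cls_proj k) (generic_args ! i)]) = (if i = k then - generic else 0)"
    if i: "i < m" for i
  proof (cases "i = k")
    case True
    have "generic_args[k := cls_fun k] = generic_args"
      using nth_generic_args[OF k] list_update_id by metis
    then have "\<iota> (generic_args[k := fscale (-1) (cls_fun k)]) = - generic"
      using iota_update_scale[OF generic_args k cls_fun_dual, of "-1"] by (simp add: generic_def)
    moreover have "dact (cls_proj k) (generic_args ! k) = fscale (-1) (cls_fun k)"
      using k by (simp add: nth_generic_args dact_cls_proj cls_part_cls_fun fun_eq_iff)
    ultimately show ?thesis using True by simp
  next
    case False
    then show ?thesis
      using i iota_update_W[OF generic_args i W_zero]
      by (simp add: nth_generic_args dact_cls_proj cls_part_cls_fun)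
  qed
  then show ?thesis
    using k by (simp add: gl_act_iota[OF cls_proj_glM generic_args, folded generic_def])
qed

lemma gl_act_cls_shift_generic: "gl_act (cls_shift k) generic = 0"
proof -
  have "\<iota> (generic_args[i := dact (cls_shift k) (generic_args ! i)]) = 0" if "i < m" for i
    using that iota_update_W[OF generic_args that W_zero]
    by (simp add: nth_generic_args shift_diff_cls_fun[unfolded shift_diff_def])
  then show ?thesis
    by (simp add: generic_def gl_act_iota[OF cls_shift_glM generic_args])
qed

text \<open>Cyclicity of the generic tensor, by induction on the number of slots that differ from
  the generic one: the dual action of cls_spread r c moves the class functional in slot r to an
  arbitrary functional and kills the class functionals in all other slots.\<close>

lemma commuting_vanishes_step:
  assumes D: "Vector_Spaces.linear sT sT D"
    and comm: "\<And>\<phi> t. \<phi> \<in> glM sV W \<Longrightarrow> D (gl_act \<phi> t) = gl_act \<phi> (D t)"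
    and r: "r < m" and fs: "fs \<in> Args" and fs_tail: "\<And>i. r < i \<Longrightarrow> i < m \<Longrightarrow> fs ! i = cls_fun i"
    and IH: "\<And>gs. gs \<in> Args \<Longrightarrow> (\<And>i. r \<le> i \<Longrightarrow> i < m \<Longrightarrow> gs ! i = cls_fun i) \<Longrightarrow> D (\<iota> gs) = 0"
  shows "D (\<iota> fs) = 0"
proof -
  interpret D: linear sT sT D by fact
  have len: "length fs = m" and g: "fs ! r \<in> Vdual"
    using fs r by (simp_all add: args_iff)
  define gs where "gs = fs[r := cls_fun r]"
  have gs: "gs \<in> Args"
    unfolding gs_def by (rule args_update[OF fs cls_fun_dual])
  have gs_tail: "gs ! i = cls_fun i" if "r \<le> i" "i < m" for i
    using fs_tail that len by (cases "i = r") (auto simp: gs_def)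
  define \<phi> where "\<phi> = cls_spread r (\<lambda>j. - (fs ! r) (vb j))"
  have \<phi>: "\<phi> \<in> glM sV W"
    unfolding \<phi>_def using r by (intro cls_spread_glM) simp
  have d\<phi>: "dact \<phi> (cls_fun i) = (if i = r then fs ! r else 0)" if "i < m" for i
    using dact_cls_spread_cls_fun[OF r that] coord_fun_coords[OF g] by (simp add: \<phi>_def)
  have "D (\<iota> (gs[i := dact \<phi> (gs ! i)])) = (if i = r then D (\<iota> fs) else 0)" if i: "i < m" for i
  proof -
    consider "i < r" | "i = r" | "r < i" by linarith
    then show ?thesis
    proof cases
      case 1
      have "dact \<phi> (gs ! i) \<in> Vdual"
        using dual_endo_dual[OF dual_endo_dact[OF \<phi>]] gs i by (simp add: args_iff)
      then have "D (\<iota> (gs[i := dact \<phi> (gs ! i)])) = 0"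
        using 1 gs_tail by (intro IH args_update[OF gs]) auto
      then show ?thesis using 1 by simp
    next
      case 2
      then have "gs[i := dact \<phi> (gs ! i)] = fs"
        using r len d\<phi>[OF r] by (simp add: gs_def)
      then show ?thesis using 2 by simp
    qed (use i gs_tail d\<phi> iota_update_W[OF gs i W_zero] in simp)
  qed
  then have "D (gl_act \<phi> (\<iota> gs)) = D (\<iota> fs)"
    using r by (simp add: gl_act_iota[OF \<phi> gs] D.sum)
  moreover have "D (gl_act \<phi> (\<iota> gs)) = 0"
    using comm[OF \<phi>] IH[OF gs gs_tail] TT.linear_0[OF linear_gl_act[OF \<phi>]] by simp
  ultimately show ?thesis by simp
qed

lemma commuting_vanishes:
  assumes D: "Vector_Spaces.linear sT sT D"
    and comm: "\<And>\<phi> t. \<phi> \<in> glM sV W \<Longrightarrow> D (gl_act \<phi> t) = gl_act \<phi> (D t)"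
    and D0: "D generic = 0"
  shows "D = (\<lambda>_. 0)"
proof (rule linear_eq_on_tensors[OF D TT.linear_zero])
  have "D (\<iota> fs) = 0" if "r \<le> m" "fs \<in> Args" "\<And>i. r \<le> i \<Longrightarrow> i < m \<Longrightarrow> fs ! i = cls_fun i" for r fs
    using that
  proof (induct r arbitrary: fs)
    case 0
    then have "fs = generic_args"
      by (intro nth_equalityI) (auto simp: args_iff nth_generic_args)
    then show ?case using D0 by (simp add: generic_def)
  next
    case (Suc r)
    have r: "r < m" and tail: "\<And>i. r < i \<Longrightarrow> i < m \<Longrightarrow> fs ! i = cls_fun i"
      using Suc.prems(1,3) by auto
    have IH: "D (\<iota> gs) = 0" if "gs \<in> Args" "\<And>i. r \<le> i \<Longrightarrow> i < m \<Longrightarrow> gs ! i = cls_fun i" for gs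
      using Suc.hyps[OF _ that] r by simp
    show ?case
      by (rule commuting_vanishes_step[OF D comm r Suc.prems(2) tail IH])
  qed
  from this[of m] show "D (\<iota> fs) = 0" if "fs \<in> Args" for fs
    using that by simp
qed

section \<open>The commutant\<close>

abbreviation "class_maps \<equiv> PiE {..<m} (\<lambda>_. {..<m})"

lemma dual_endos_cls_part: "dual_endos (\<lambda>i. cls_part (\<beta> i))"
  by (simp add: dual_endos_def dual_endo_cls_part)

lemma sum_tmap_cls_part_prefix:
  "R \<le> m \<Longrightarrow> (\<Sum>\<beta>\<in>PiE {..<R} (\<lambda>_. {..<m}). tmap (\<lambda>i. if i < R then cls_part (\<beta> i) else id) t) = t"
proof (induct R)
  case 0
  have "(\<lambda>i::nat. if i < 0 then cls_part (undefined i) else id) = (\<lambda>_. id)" by auto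
  then show ?case by (simp add: tmap_id tmap_id[unfolded id_def])
next
  case (Suc R)
  then have R: "R < m" by simp
  let ?L = "\<lambda>\<beta> i. if i < R then cls_part (\<beta> i) else id"
  have L: "dual_endos (?L \<beta>)" for \<beta>
    by (simp add: dual_endos_def dual_endo_cls_part dual_endo_id)
  have "(\<Sum>\<beta>\<in>PiE {..<Suc R} (\<lambda>_. {..<m}). tmap (\<lambda>i. if i < Suc R then cls_part (\<beta> i) else id) t)
      = (\<Sum>\<beta>\<in>PiE {..<R} (\<lambda>_. {..<m}). \<Sum>k<m. tmap ((?L \<beta>)(R := cls_part k)) t)"
    unfolding lessThan_Suc sum_PiE_insert[of R "{..<R}", simplified]
    by (subst sum.swap) (intro sum.cong refl arg_cong2[where f = tmap] ext, auto)
  also have "\<dots> = (\<Sum>\<beta>\<in>PiE {..<R} (\<lambda>_. {..<m}). tmap (?L \<beta>) t)"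
  proof (rule sum.cong[OF refl])
    fix \<beta>
    have "(\<Sum>k<m. tmap ((?L \<beta>)(R := cls_part k)) t) = tmap ((?L \<beta>)(R := (\<lambda>f. \<Sum>k<m. cls_part k f))) t"
      by (rule tmap_slot_sum[OF L R dual_endo_cls_part, symmetric])
    also have "tmap ((?L \<beta>)(R := (\<lambda>f. \<Sum>k<m. cls_part k f))) = tmap (?L \<beta>)"
      using R by (intro tmap_cong dual_endos_fun_upd L dual_endo_sum dual_endo_cls_part)
        (auto simp: sum_cls_part)
    finally show "(\<Sum>k<m. tmap ((?L \<beta>)(R := cls_part k)) t) = tmap (?L \<beta>) t" .
  qed
  also have "\<dots> = t" using Suc.hyps R by simp
  finally show ?case .
qed

lemma sum_tmap_cls_part: "(\<Sum>\<beta>\<in>class_maps. tmap (\<lambda>i. cls_part (\<beta> i)) t) = t"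
proof -
  have "tmap (\<lambda>i. cls_part (\<beta> i)) = tmap (\<lambda>i. if i < m then cls_part (\<beta> i) else id)" for \<beta>
    by (rule tmap_cong) (auto simp: dual_endos_def dual_endo_cls_part dual_endo_id)
  then show ?thesis using sum_tmap_cls_part_prefix[of m t] by simp
qed

lemma tmap_cls_part_not_inj:
  assumes y: "\<And>k. k < m \<Longrightarrow> gl_act (cls_proj k) y = - y"
    and \<beta>: "\<beta> \<in> class_maps" "\<not> inj_on \<beta> {..<m}"
  shows "tmap (\<lambda>i. cls_part (\<beta> i)) y = 0"
proof -
  obtain k where k: "k < m" "\<And>i. i < m \<Longrightarrow> \<beta> i \<noteq> k"
    using PiE_not_inj_on_misses[OF \<beta>] by blast
  interpret M: linear sT sT "tmap (\<lambda>i. cls_part (\<beta> i))"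
    using linear_tmap[OF dual_endos_cls_part] .
  have "tmap (\<lambda>i. cls_part (\<beta> i)) (tmap (slot i (dact (cls_proj k))) y) = 0" if i: "i < m" for i
  proof -
    have L: "dual_endos (slot i (dact (cls_proj k)))"
      by (rule dual_endos_slot[OF dual_endo_dact[OF cls_proj_glM]])
    have "tmap (\<lambda>l. cls_part (\<beta> l) \<circ> slot i (dact (cls_proj k)) l) = (\<lambda>_. 0)"
    proof (rule tmap_zero_slot[OF dual_endos_comp[OF dual_endos_cls_part L] i])
      fix f assume "f \<in> Vdual"
      then show "(cls_part (\<beta> i) \<circ> slot i (dact (cls_proj k)) i) f \<in> W"
        using k(2)[OF i] W_zero by (simp add: slot_def dact_cls_proj cls_part_neg cls_part_cls_part)
    qed
    then show ?thesis
      using tmap_comp[OF dual_endos_cls_part L] by simp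
  qed
  then have "tmap (\<lambda>i. cls_part (\<beta> i)) (gl_act (cls_proj k) y) = 0"
    by (simp add: gl_act_def M.sum)
  then show ?thesis
    using y[OF k(1)] by (simp add: M.neg)
qed

lemma tmap_cls_part_gl_act_shift:
  assumes \<beta>: "\<beta> \<in> class_maps" "inj_on \<beta> {..<m}" and i: "i < m"
  shows "tmap (\<lambda>l. cls_part (\<beta> l)) (gl_act (cls_shift (\<beta> i)) t)
    = tmap (slot i (shift_diff (\<beta> i))) (tmap (\<lambda>l. cls_part (\<beta> l)) t)"
proof -
  let ?k = "\<beta> i" and ?B = "\<lambda>l. cls_part (\<beta> l)"
  interpret M: linear sT sT "tmap ?B"
    using linear_tmap[OF dual_endos_cls_part] .
  have S: "dual_endos (slot j (shift_diff ?k))" for j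
    by (rule dual_endos_slot[OF dual_endo_shift_diff])
  have BU: "dual_endos (?B(i := shift_diff ?k))"
    by (rule dual_endos_fun_upd[OF dual_endos_cls_part dual_endo_shift_diff])
  have "tmap ?B (tmap (slot j (shift_diff ?k)) t) = (if j = i then tmap (?B(i := shift_diff ?k)) t else 0)"
    if j: "j < m" for j
  proof -
    have BS: "dual_endos (\<lambda>l. cls_part (\<beta> l) \<circ> slot j (shift_diff ?k) l)"
      by (rule dual_endos_comp[OF dual_endos_cls_part S])
    show ?thesis
    proof (cases "j = i")
      case True
      have "tmap (\<lambda>l. cls_part (\<beta> l) \<circ> slot j (shift_diff ?k) l) = tmap (?B(i := shift_diff ?k))"
        by (rule tmap_cong[OF BS BU]) (auto simp: True slot_def cls_part_shift_diff)
      then show ?thesis using True tmap_comp[OF dual_endos_cls_part S] by simp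
    next
      case False
      have "\<beta> j \<noteq> ?k" using \<beta>(2) False i j unfolding inj_on_def by auto
      then have "tmap (\<lambda>l. cls_part (\<beta> l) \<circ> slot j (shift_diff ?k) l) = (\<lambda>_. 0)"
        using W_zero by (intro tmap_zero_slot[OF BS j]) (simp add: slot_def cls_part_shift_diff)
      then show ?thesis using False tmap_comp[OF dual_endos_cls_part S] by simp
    qed
  qed
  then have "tmap ?B (gl_act (cls_shift ?k) t) = tmap (?B(i := shift_diff ?k)) t"
    using i by (simp add: gl_act_def M.sum shift_diff_def[symmetric])
  also have "tmap (?B(i := shift_diff ?k)) = tmap (\<lambda>l. slot i (shift_diff ?k) l \<circ> cls_part (\<beta> l))"
    by (rule tmap_cong[OF BU dual_endos_comp[OF S dual_endos_cls_part]])
      (auto simp: slot_def shift_diff_cls_part)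
  also have "\<dots> t = tmap (slot i (shift_diff ?k)) (tmap ?B t)"
    by (rule tmap_comp[OF S dual_endos_cls_part, symmetric])
  finally show ?thesis .
qed

lemma tmap_cls_part_slot:
  assumes y: "\<And>k. k < m \<Longrightarrow> gl_act (cls_shift k) y = 0"
    and \<beta>: "\<beta> \<in> class_maps" "inj_on \<beta> {..<m}" and i: "i < m"
  shows "tmap (\<lambda>l. cls_part (\<beta> l)) y = tmap (slot i (coeff_part (\<beta> i))) (tmap (\<lambda>l. cls_part (\<beta> l)) y)"
proof -
  let ?k = "\<beta> i" and ?z = "tmap (\<lambda>l. cls_part (\<beta> l)) y"
  have k: "?k < m" using \<beta>(1) i by auto
  have U: "dual_endos (slot i (shift_diff ?k))" and S: "dual_endos (slot i (shift_diff_inv ?k))"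
    by (simp_all add: dual_endos_slot dual_endo_shift_diff dual_endo_shift_diff_inv k)
  have P: "dual_endos ((\<lambda>_. id)(i := cls_part ?k))"
    by (rule dual_endos_fun_upd[OF dual_endos_id dual_endo_cls_part])
  have "tmap (slot i (shift_diff ?k)) ?z = 0"
    using tmap_cls_part_gl_act_shift[OF \<beta> i, of y] y[OF k] linear_tmap[OF dual_endos_cls_part]
    by (simp add: TT.linear_0)
  then have "0 = tmap (slot i (shift_diff_inv ?k)) (tmap (slot i (shift_diff ?k)) ?z)"
    using linear_tmap[OF S] by (simp add: TT.linear_0)
  also have "\<dots> = tmap (\<lambda>l. slot i (shift_diff_inv ?k) l \<circ> slot i (shift_diff ?k) l) ?z"
    by (rule tmap_comp[OF S U])
  also have "tmap (\<lambda>l. slot i (shift_diff_inv ?k) l \<circ> slot i (shift_diff ?k) l)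
      = tmap ((\<lambda>_. id)(i := (\<lambda>f. cls_part ?k f - coeff_part ?k f)))"
    by (rule tmap_cong[OF dual_endos_comp[OF S U] dual_endos_fun_upd[OF dual_endos_id]])
      (auto simp: slot_def shift_diff_inv_shift_diff[OF k] dual_endo_diff dual_endo_cls_part
        dual_endo_coeff_part[OF k])
  also have "\<dots> ?z = tmap ((\<lambda>_. id)(i := cls_part ?k)) ?z - tmap (slot i (coeff_part ?k)) ?z"
    unfolding slot_def by (rule tmap_slot_diff[OF dual_endos_id i dual_endo_cls_part dual_endo_coeff_part[OF k]])
  also have "tmap ((\<lambda>_. id)(i := cls_part ?k)) ?z = ?z"
  proof -
    have "tmap ((\<lambda>_. id)(i := cls_part ?k)) ?z = tmap (\<lambda>l. ((\<lambda>_. id)(i := cls_part ?k)) l \<circ> cls_part (\<beta> l)) y"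
      by (rule tmap_comp[OF P dual_endos_cls_part])
    also have "tmap (\<lambda>l. ((\<lambda>_. id)(i := cls_part ?k)) l \<circ> cls_part (\<beta> l)) = tmap (\<lambda>l. cls_part (\<beta> l))"
      by (rule tmap_cong[OF dual_endos_comp[OF P dual_endos_cls_part] dual_endos_cls_part])
        (auto simp: cls_part_cls_part)
    finally show ?thesis .
  qed
  finally show ?thesis by simp
qed

definition coeff_prod :: "(nat \<Rightarrow> nat) \<Rightarrow> ('v \<Rightarrow> 'k) list \<Rightarrow> 'k" where
  "coeff_prod \<beta> fs = (\<Prod>l<m. cls_coeff (\<beta> l) (fs ! l))"

lemma coeff_prod_update:
  assumes "i < m" "length fs = m"
  shows "coeff_prod \<beta> (fs[i := x]) = cls_coeff (\<beta> i) x * (\<Prod>l\<in>{..<m} - {i}. cls_coeff (\<beta> l) (fs ! l))"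
  unfolding coeff_prod_def using assms by (subst prod.remove[of _ i]) (auto intro!: prod.cong)

lemma quot_multilinear_coeff_prod:
  assumes \<beta>: "\<And>l. l < m \<Longrightarrow> \<beta> l < m"
  shows "quot_multilinear sV W (*) m (coeff_prod \<beta>)"
  unfolding quot_multilinear_def
proof (intro conjI ballI allI impI)
  fix fs i g h c assume "fs \<in> Args" "i < m"
  then show "coeff_prod \<beta> (fs[i := g + h]) = coeff_prod \<beta> (fs[i := g]) + coeff_prod \<beta> (fs[i := h])"
    and "coeff_prod \<beta> (fs[i := fscale c g]) = c * coeff_prod \<beta> (fs[i := g])"
    by (simp_all add: args_iff coeff_prod_update cls_coeff_add cls_coeff_scale \<beta> distrib_right)
next
  fix fs assume fs: "fs \<in> Args" and "\<exists>i<m. fs ! i \<in> W"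
  then obtain i where i: "i < m" "fs ! i \<in> W" by blast
  have "coeff_prod \<beta> fs = coeff_prod \<beta> (fs[i := fs ! i])" by simp
  also have "\<dots> = 0"
    using fs i by (simp only: coeff_prod_update args_iff cls_coeff_W \<beta> mult_zero_left)
  finally show "coeff_prod \<beta> fs = 0" .
qed

definition coeff_form :: "(nat \<Rightarrow> nat) \<Rightarrow> 't \<Rightarrow> 'k" where
  "coeff_form \<beta> = (SOME l. Vector_Spaces.linear sT (*) l \<and> (\<forall>fs\<in>Args. l (\<iota> fs) = coeff_prod \<beta> fs))"

lemma coeff_form:
  assumes "\<And>l. l < m \<Longrightarrow> \<beta> l < m"
  shows "Vector_Spaces.linear sT (*) (coeff_form \<beta>) \<and> (\<forall>fs\<in>Args. coeff_form \<beta> (\<iota> fs) = coeff_prod \<beta> fs)"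
proof -
  obtain l where "Vector_Spaces.linear sT (*) l" "\<forall>fs\<in>Args. coeff_prod \<beta> fs = l (\<iota> fs)"
    using iota_universal[OF quot_multilinear_coeff_prod[of \<beta>, OF assms]] by blast
  then have "\<exists>l. Vector_Spaces.linear sT (*) l \<and> (\<forall>fs\<in>Args. l (\<iota> fs) = coeff_prod \<beta> fs)"
    by auto
  then show ?thesis
    unfolding coeff_form_def by (rule someI_ex)
qed

lemma tmap_coeff_part:
  assumes \<beta>: "\<And>l. l < m \<Longrightarrow> \<beta> l < m"
  shows "tmap (\<lambda>l. coeff_part (\<beta> l)) t = sT (coeff_form \<beta> t) (\<iota> (map (\<lambda>l. cls_fun (\<beta> l)) [0..<m]))"
proof -
  let ?es = "map (\<lambda>l. cls_fun (\<beta> l)) [0..<m]"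
  have Q: "dual_endos (\<lambda>l. coeff_part (\<beta> l))"
    by (simp add: dual_endos_def dual_endo_coeff_part \<beta>)
  interpret C: linear sT "(*)" "coeff_form \<beta>"
    using coeff_form[of \<beta>, OF \<beta>] by blast
  have "tmap (\<lambda>l. coeff_part (\<beta> l)) = (\<lambda>t. sT (coeff_form \<beta> t) (\<iota> ?es))"
  proof (rule linear_eq_on_tensors)
    show "Vector_Spaces.linear sT sT (\<lambda>t. sT (coeff_form \<beta> t) (\<iota> ?es))"
      unfolding linear_iff using T.vector_space_axioms by (simp add: C.add C.scale T.scale_left_distrib)
    fix fs assume fs: "fs \<in> Args"
    have es: "?es \<in> Args" by (simp add: args_iff cls_fun_dual)
    have "map_slots (\<lambda>l. coeff_part (\<beta> l)) fs = map (\<lambda>l. fscale (cls_coeff (\<beta> l) (fs ! l)) (?es ! l)) [0..<m]"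
      by (intro nth_equalityI) (auto simp: nth_map_slots coeff_part_def)
    then show "tmap (\<lambda>l. coeff_part (\<beta> l)) (\<iota> fs) = sT (coeff_form \<beta> (\<iota> fs)) (\<iota> ?es)"
      using fs coeff_form[of \<beta>, OF \<beta>] by (simp add: tmap_iota[OF Q] iota_scale_slots[OF es] coeff_prod_def)
  qed (rule linear_tmap[OF Q])
  then show ?thesis by simp
qed

lemma tmap_cls_part_inj:
  assumes y: "\<And>k. k < m \<Longrightarrow> gl_act (cls_shift k) y = 0"
    and \<beta>: "\<beta> \<in> class_maps" "inj_on \<beta> {..<m}"
  shows "tmap (\<lambda>i. cls_part (\<beta> i)) y =
    sT (coeff_form \<beta> (tmap (\<lambda>i. cls_part (\<beta> i)) y)) (\<iota> (map (\<lambda>l. cls_fun (\<beta> l)) [0..<m]))"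
proof -
  let ?z = "tmap (\<lambda>i. cls_part (\<beta> i)) y" and ?Q = "\<lambda>r l. if l < r then coeff_part (\<beta> l) else id"
  have \<beta>m: "\<And>l. l < m \<Longrightarrow> \<beta> l < m" using \<beta>(1) by auto
  have Q: "dual_endos (?Q r)" for r
    by (simp add: dual_endos_def dual_endo_coeff_part \<beta>m dual_endo_id)
  have "?z = tmap (?Q r) ?z" if "r \<le> m" for r
    using that
  proof (induct r)
    case 0
    have "(\<lambda>l::nat. if l < 0 then coeff_part (\<beta> l) else id) = (\<lambda>_. id)" by auto
    then show ?case by (simp add: tmap_id tmap_id[unfolded id_def])
  next
    case (Suc r)
    then have r: "r < m" by simp
    have S: "dual_endos (slot r (coeff_part (\<beta> r)))"
      by (rule dual_endos_slot[OF dual_endo_coeff_part[OF \<beta>m[OF r]]])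
    have "tmap (?Q (Suc r)) = tmap (\<lambda>l. ?Q r l \<circ> slot r (coeff_part (\<beta> r)) l)"
      by (rule tmap_cong[OF Q dual_endos_comp[OF Q S]]) (auto simp: slot_def)
    then have "tmap (?Q (Suc r)) ?z = tmap (?Q r) (tmap (slot r (coeff_part (\<beta> r))) ?z)"
      by (simp add: tmap_comp[OF Q S])
    also have "\<dots> = tmap (?Q r) ?z"
      using tmap_cls_part_slot[OF y \<beta> r] by simp
    finally show ?case using Suc r by simp
  qed
  from this[of m] have "?z = tmap (\<lambda>l. coeff_part (\<beta> l)) ?z"
    using tmap_cong[OF Q, of "\<lambda>l. coeff_part (\<beta> l)" m] by (simp add: dual_endos_def dual_endo_coeff_part \<beta>m)
  then show ?thesis
    by (simp add: tmap_coeff_part[OF \<beta>m])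
qed

abbreviation "inv_index \<sigma> \<equiv> restrict (inv \<sigma>) {..<m}"

lemma perm_op_generic:
  assumes \<sigma>: "\<sigma> \<in> Sym m"
  shows "P \<sigma> generic = \<iota> (map (\<lambda>l. cls_fun (inv_index \<sigma> l)) [0..<m])"
proof -
  have p: "\<sigma> permutes {..<length generic_args}" using \<sigma> by (simp add: Sym_def)
  have "permute_list (inv \<sigma>) generic_args = map (\<lambda>l. cls_fun (inv_index \<sigma> l)) [0..<m]"
    using permutes_in_image[OF permutes_inv[OF p]]
    by (intro nth_equalityI) (simp_all add: permute_list_inv_nth[OF p] nth_generic_args)
  then show ?thesis
    using perm_op_iota[OF \<sigma> generic_args] by (simp add: generic_def)
qed

lemma gl_end_generic:
  assumes E: "E \<in> gl_end sV W sT m \<iota>"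
  obtains a where "a \<in> grp_alg m" "E generic = rep a generic"
proof -
  interpret E: linear sT sT E using linear_gl_end[OF E] .
  define y where "y = E generic"
  have y_proj: "gl_act (cls_proj k) y = - y" if "k < m" for k
    using gl_end_commute[OF E cls_proj_glM, of k generic] gl_act_cls_proj_generic[OF that]
    by (simp add: y_def E.neg)
  have y_shift: "gl_act (cls_shift k) y = 0" for k
    using gl_end_commute[OF E cls_shift_glM, of k generic] gl_act_cls_shift_generic
    by (simp add: y_def E.zero)
  define c where "c \<beta> = coeff_form \<beta> (tmap (\<lambda>i. cls_part (\<beta> i)) y)" for \<beta>
  define a where "a \<sigma> = (if \<sigma> \<in> Sym m then c (inv_index \<sigma>) else 0)" for \<sigma>
  have "y = (\<Sum>\<beta>\<in>class_maps. tmap (\<lambda>i. cls_part (\<beta> i)) y)"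
    by (rule sum_tmap_cls_part[symmetric])
  also have "\<dots> = (\<Sum>\<beta>\<in>{\<beta> \<in> class_maps. inj_on \<beta> {..<m}}. tmap (\<lambda>i. cls_part (\<beta> i)) y)"
    by (rule sum.mono_neutral_right) (auto simp: finite_PiE tmap_cls_part_not_inj[OF y_proj])
  also have "\<dots> = (\<Sum>\<beta>\<in>{\<beta> \<in> class_maps. inj_on \<beta> {..<m}}. sT (c \<beta>) (\<iota> (map (\<lambda>l. cls_fun (\<beta> l)) [0..<m])))"
    by (rule sum.cong[OF refl]) (use tmap_cls_part_inj[OF y_shift] in \<open>auto simp: c_def\<close>)
  also have "\<dots> = (\<Sum>\<sigma>\<in>Sym m. sT (c (inv_index \<sigma>)) (\<iota> (map (\<lambda>l. cls_fun (inv_index \<sigma> l)) [0..<m])))"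
    by (rule sum_inj_PiE_eq_sum_Sym)
  also have "\<dots> = rep a generic"
    unfolding rep_apply by (rule sum.cong[OF refl]) (simp add: a_def perm_op_generic)
  finally have "E generic = rep a generic"
    by (simp add: y_def)
  moreover have "a \<in> grp_alg m"
    by (simp add: grp_alg_def a_def)
  ultimately show thesis
    using that by blast
qed

lemma gl_end_eq_rep:
  assumes E: "E \<in> gl_end sV W sT m \<iota>"
  shows "\<exists>a\<in>grp_alg m. E = rep a"
proof -
  obtain a where a: "a \<in> grp_alg m" "E generic = rep a generic"
    using gl_end_generic[OF E] by blast
  have "(\<lambda>t. E t - rep a t) = (\<lambda>_. 0)"
  proof (rule commuting_vanishes)
    show "Vector_Spaces.linear sT sT (\<lambda>t. E t - rep a t)"
      by (rule TT.linear_compose_sub[OF linear_gl_end[OF E] linear_rep])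
    fix \<phi> t assume \<phi>: "\<phi> \<in> glM sV W"
    interpret A: linear sT sT "gl_act \<phi>" using linear_gl_act[OF \<phi>] .
    show "E (gl_act \<phi> t) - rep a (gl_act \<phi> t) = gl_act \<phi> (E t - rep a t)"
      by (simp add: gl_end_commute[OF E \<phi>] rep_gl_act_commute[OF \<phi>] A.diff)
  qed (use a in simp)
  then have "E = rep a"
    by (auto simp: fun_eq_iff)
  with a show ?thesis by blast
qed

lemma coeff_form_perm_op_generic:
  assumes \<sigma>: "\<sigma> \<in> Sym m" and \<tau>: "\<tau> \<in> Sym m"
  shows "coeff_form (inv_index \<tau>) (P \<sigma> generic) = (if \<sigma> = \<tau> then 1 else 0)"
proof -
  have lt: "\<And>l. l < m \<Longrightarrow> inv_index \<rho> l < m" if "\<rho> \<in> Sym m" for \<rho>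
    using restrict_inv_Sym_PiE[OF that] by auto
  have "coeff_form (inv_index \<tau>) (P \<sigma> generic) = coeff_prod (inv_index \<tau>) (map (\<lambda>l. cls_fun (inv_index \<sigma> l)) [0..<m])"
    using coeff_form[of "inv_index \<tau>", OF lt[OF \<tau>]] by (simp add: perm_op_generic[OF \<sigma>] args_iff cls_fun_dual)
  also have "\<dots> = (\<Prod>l<m. if inv_index \<sigma> l = inv_index \<tau> l then 1 else 0)"
    unfolding coeff_prod_def by (rule prod.cong[OF refl]) (simp add: cls_coeff_cls_fun inv_Sym_lessThan[OF \<tau>])
  also have "\<dots> = (if \<sigma> = \<tau> then 1 else 0)"
  proof (cases "\<sigma> = \<tau>")
    case False
    have "\<exists>l<m. inv \<sigma> l \<noteq> inv \<tau> l"
    proof (rule ccontr)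
      assume "\<not> (\<exists>l<m. inv \<sigma> l \<noteq> inv \<tau> l)"
      moreover have "inv \<sigma> l = l" "inv \<tau> l = l" if "\<not> l < m" for l
        using permutes_not_in[OF permutes_inv, of _ "{..<m}" l] \<sigma> \<tau> that by (simp_all add: Sym_def)
      ultimately have "inv \<sigma> = inv \<tau>"
        by (metis ext)
      then show False
        using False \<sigma> \<tau> permutes_inv_inv by (metis Sym_def mem_Collect_eq)
    qed
    then show ?thesis
      using False by (auto intro: prod_zero)
  qed simp
  finally show ?thesis .
qed

lemma coeff_form_rep_generic:
  assumes \<tau>: "\<tau> \<in> Sym m"
  shows "coeff_form (inv_index \<tau>) (rep a generic) = a \<tau>"
proof -
  have "\<And>l. l < m \<Longrightarrow> inv_index \<tau> l < m"
    using restrict_inv_Sym_PiE[OF \<tau>] by auto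
  then interpret C: linear sT "(*)" "coeff_form (inv_index \<tau>)"
    using coeff_form by blast
  have "coeff_form (inv_index \<tau>) (rep a generic) = (\<Sum>\<sigma>\<in>Sym m. a \<sigma> * (if \<sigma> = \<tau> then 1 else 0))"
    unfolding rep_apply C.sum C.scale by (rule sum.cong[OF refl]) (simp add: coeff_form_perm_op_generic \<tau>)
  then show ?thesis
    using \<tau> finite_Sym by (simp add: if_distrib cong: if_cong)
qed

lemma inj_on_rep: "inj_on rep (grp_alg m)"
proof (rule inj_onI)
  fix a b assume a: "a \<in> grp_alg m" and b: "b \<in> grp_alg m" and eq: "rep a = rep b"
  show "a = b"
  proof
    fix \<tau>
    show "a \<tau> = b \<tau>"
      using coeff_form_rep_generic[of \<tau> a] coeff_form_rep_generic[of \<tau> b] eq a b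
      by (cases "\<tau> \<in> Sym m") (auto simp: grp_alg_def)
  qed
qed

lemma bij_betw_rep_gl_end: "bij_betw rep (grp_alg m) (gl_end sV W sT m \<iota>)"
  unfolding bij_betw_def using inj_on_rep rep_in_gl_end gl_end_eq_rep by blast

end

theorem proposition3p2:
  fixes sV :: "'k::field_char_0 \<Rightarrow> 'v::ab_group_add \<Rightarrow> 'v"
    and W :: "('v \<Rightarrow> 'k) set"
    and sT :: "'k \<Rightarrow> 't::ab_group_add \<Rightarrow> 't"
    and \<iota> :: "('v \<Rightarrow> 'k) list \<Rightarrow> 't"
    and m :: nat
  assumes "mackey_pair sV W"
    and "is_quot_tensor_power sV W sT m \<iota>"
  shows "bij_betw (perm_rep sV sT m \<iota>) (grp_alg m) (gl_end sV W sT m \<iota>)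
       \<and> (\<forall>a\<in>grp_alg m. \<forall>b\<in>grp_alg m.
            perm_rep sV sT m \<iota> (ga_mult m a b) = perm_rep sV sT m \<iota> a \<circ> perm_rep sV sT m \<iota> b)
       \<and> (\<forall>a\<in>grp_alg m. \<forall>b\<in>grp_alg m. \<forall>c.
            perm_rep sV sT m \<iota> (\<lambda>\<sigma>. a \<sigma> + c * b \<sigma>)
              = (\<lambda>t. perm_rep sV sT m \<iota> a t + sT c (perm_rep sV sT m \<iota> b t)))
       \<and> perm_rep sV sT m \<iota> ga_one = id"
proof -
  interpret quot_tensor_power sV W sT \<iota> m
    by unfold_locales (fact assms(1), fact assms(2))
  obtain vb ws where "mackey_dual_bases sV W vb ws"
    using exists_dual_bases by blast
  then interpret mackey_tensor_power sV W vb ws sT \<iota> m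
    by (intro mackey_tensor_power.intro quot_tensor_power_axioms)
  show ?thesis
    using bij_betw_rep_gl_end rep_mult rep_linear_comb rep_one by blast
qed

end
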